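(* Let $q\ge 2$ be an integer and $s\in(0,2)$, and let $P(x,t)=|\Psi(x,t)|^2$ be the probability density of the Weierstrass-like wave function $\Psi$ defined in the context. Then for every fixed $t\in\mathbb R$ the graph of $x\mapsto P(x,t)$ on $[0,\pi]$ has box-counting dimension $D_x=\max\{s,1\}$. In particular this dimension is the same at $t=0$ and at every later time.
   Context: For an integer $q\ge2$ and $s\in(0,2)$ define, for $x\in[0,\pi]$ and $t\in\mathbb R$, $$\Psi(x,t)=N\sum_{n=0}^{\infty} q^{n(s-2)}\sin(q^n x)\,e^{-i q^{2n} t},\qquad N=\sqrt{\tfrac{2}{\pi}\big(1-q^{2(s-2)}\big)},$$ a uniformly convergent series. Let $P(x,t)=|\Psi(x,t)|^2$. For a bounded set $A\subset\mathbb R^d$ let $N(\delta)$ be the number of cubes $[m_1\delta,(m_1+1)\delta]\times\dots\times[m_d\delta,(m_d+1)\delta]$, $m_i\in\mathbb Z$, meeting $A$. The upper and lower box-counting dimensions are $\limsup_{\delta\to0}$ and $\liminf_{\delta\to0}$ of $\ln N(\delta)/\ln(1/\delta)$. The box-counting dimension $\dim_B A$ exists when these two coincide, and is then their common value. The graph of a function $f$ on a set $U$ is $\{(u,f(u)):u\in U\}$. *)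

theory Defs
  imports "HOL-Analysis.Analysis"
begin

definition wnorm :: "nat \<Rightarrow> real \<Rightarrow> real" where
  "wnorm q s = sqrt (2 / pi * (1 - real q powr (2 * (s - 2))))"

definition Psi :: "nat \<Rightarrow> real \<Rightarrow> real \<Rightarrow> real \<Rightarrow> complex" where
  "Psi q s x t = complex_of_real (wnorm q s) *
     (\<Sum>n. complex_of_real (real q powr (real n * (s - 2)) * sin (real q ^ n * x))
           * exp (- \<i> * complex_of_real (real q ^ (2 * n) * t)))"

definition Pdens :: "nat \<Rightarrow> real \<Rightarrow> real \<Rightarrow> real \<Rightarrow> real" where
  "Pdens q s x t = (cmod (Psi q s x t))\<^sup>2"

definition grid_count :: "(real \<times> real) set \<Rightarrow> real \<Rightarrow> nat" where
  "grid_count A \<delta> = card {m :: int \<times> int. \<exists>p \<in> A.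
      of_int (fst m) * \<delta> \<le> fst p \<and> fst p \<le> (of_int (fst m) + 1) * \<delta> \<and>
      of_int (snd m) * \<delta> \<le> snd p \<and> snd p \<le> (of_int (snd m) + 1) * \<delta>}"

definition upper_box_dim :: "(real \<times> real) set \<Rightarrow> ereal" where
  "upper_box_dim A = Limsup (at_right 0)
     (\<lambda>\<delta>. ereal (ln (real (grid_count A \<delta>)) / ln (1 / \<delta>)))"

definition lower_box_dim :: "(real \<times> real) set \<Rightarrow> ereal" where
  "lower_box_dim A = Liminf (at_right 0)
     (\<lambda>\<delta>. ereal (ln (real (grid_count A \<delta>)) / ln (1 / \<delta>)))"

definition has_box_dim :: "(real \<times> real) set \<Rightarrow> real \<Rightarrow> bool" where
  "has_box_dim A D \<longleftrightarrow> lower_box_dim A = upper_box_dim A \<and> upper_box_dim A = ereal D"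

definition graph_on :: "real set \<Rightarrow> (real \<Rightarrow> real) \<Rightarrow> (real \<times> real) set" where
  "graph_on U f = {(u, f u) | u. u \<in> U}"

end

theory Submission
  imports Defs "HOL-Real_Asymp.Real_Asymp"
begin

text \<open>
  Write \<open>Psi = N * (\<Sum>n. c\<^sub>n * sin (q\<^sup>n * x))\<close> with \<open>\<bar>c\<^sub>n\<bar> = q powr (n * (s - 2))\<close>.

  Upper bound: the series is Hoelder continuous of every exponent \<open>a < min 1 (2 - s)\<close>, hence so
  is \<open>P\<close>, and the graph of an \<open>a\<close>-Hoelder function meets \<open>O(\<delta> powr (a - 2))\<close> grid squares of
  side \<open>\<delta>\<close>. Lower bound: a graph over \<open>[0, pi]\<close> meets at least \<open>pi / \<delta>\<close> squares. For \<open>s > 1\<close>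
  lacunarity gives more. By uniqueness of base-\<open>q\<close> expansions, the cosine coefficient of \<open>P\<close>
  at the frequency \<open>K = q\<^sup>M + q\<^sup>j\<close> (\<open>j \<le> 1\<close>) only sees the cross term of the modes \<open>j\<close> and
  \<open>M\<close>; it has size about \<open>q powr (M * (s - 2))\<close> for one of the two choices of \<open>j\<close>. Over each
  period \<open>l = 2 * pi / K\<close> of \<open>cos (K * x)\<close>, the integral of \<open>P x * cos (K * x)\<close> is at most \<open>l\<close>
  times the oscillation of \<open>P\<close>, i.e. at most \<open>l\<^sup>2\<close> times the number of squares of side \<open>l\<close>
  in that column. Hence about \<open>l powr (- s)\<close> squares of side \<open>l\<close> meet the graph.
\<close>

section \<open>Box dimension from power bounds\<close>

lemma has_box_dim_if_tendsto:
  assumes "((\<lambda>\<delta>. ln (real (grid_count A \<delta>)) / ln (1 / \<delta>)) \<longlongrightarrow> D) (at_right 0)"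
  shows "has_box_dim A D"
proof -
  have lim: "((\<lambda>\<delta>. ereal (ln (real (grid_count A \<delta>)) / ln (1 / \<delta>))) \<longlongrightarrow> ereal D) (at_right 0)"
    using assms by (rule tendsto_ereal)
  show ?thesis
    unfolding has_box_dim_def upper_box_dim_def lower_box_dim_def
    using lim_imp_Limsup[OF _ lim] lim_imp_Liminf[OF _ lim] by simp
qed

lemma eventually_ln_ratio_gt_if_lower_bound:
  fixes N :: "real \<Rightarrow> real"
  assumes "c > 0" and lower: "\<forall>\<^sub>F \<delta> in at_right 0. c * \<delta> powr (- D) \<le> N \<delta>" and "y < D"
  shows "\<forall>\<^sub>F \<delta> in at_right 0. y < ln (N \<delta>) / ln (1 / \<delta>)"
proof -
  have "((\<lambda>\<delta>. ln (c * \<delta> powr (- D)) / ln (1 / \<delta>)) \<longlongrightarrow> D) (at_right 0)"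
    using \<open>c > 0\<close> by real_asymp
  from order_tendstoD(1)[OF this \<open>y < D\<close>]
  have "\<forall>\<^sub>F \<delta> in at_right 0. y < ln (c * \<delta> powr (- D)) / ln (1 / \<delta>)" .
  moreover have "\<forall>\<^sub>F \<delta> in at_right (0::real). 0 < ln (1 / \<delta>)" by real_asymp
  ultimately show ?thesis using lower eventually_at_right_less[of 0]
  proof eventually_elim
    case (elim \<delta>)
    have "ln (c * \<delta> powr (- D)) \<le> ln (N \<delta>)"
      using elim(3,4) \<open>c > 0\<close> by (intro ln_mono) auto
    then show ?case using elim(1,2) by (meson divide_right_mono less_le_trans less_imp_le)
  qed
qed

lemma eventually_ln_ratio_lt_if_upper_bound:
  fixes N :: "real \<Rightarrow> real"
  assumes pos: "\<forall>\<^sub>F \<delta> in at_right 0. 0 < N \<delta>"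
    and upper: "\<forall>\<^sub>F \<delta> in at_right 0. N \<delta> \<le> K * \<delta> powr (- e)" and "e < y"
  shows "\<forall>\<^sub>F \<delta> in at_right 0. ln (N \<delta>) / ln (1 / \<delta>) < y"
proof -
  have "((\<lambda>\<delta>. ln (max K 1 * \<delta> powr (- e)) / ln (1 / \<delta>)) \<longlongrightarrow> e) (at_right 0)"
    by real_asymp
  from order_tendstoD(2)[OF this \<open>e < y\<close>]
  have "\<forall>\<^sub>F \<delta> in at_right 0. ln (max K 1 * \<delta> powr (- e)) / ln (1 / \<delta>) < y" .
  moreover have "\<forall>\<^sub>F \<delta> in at_right (0::real). 0 < ln (1 / \<delta>)" by real_asymp
  ultimately show ?thesis using upper pos
  proof eventually_elim
    case (elim \<delta>)
    have "N \<delta> \<le> max K 1 * \<delta> powr (- e)"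
      using elim(3) by (rule order_trans) (intro mult_right_mono; simp)
    then have "ln (N \<delta>) \<le> ln (max K 1 * \<delta> powr (- e))"
      using elim(4) by simp
    then show ?case using elim(1,2) by (meson divide_right_mono le_less_trans less_imp_le)
  qed
qed

lemma has_box_dim_if_power_bounds:
  assumes "c > 0"
    and lower: "\<forall>\<^sub>F \<delta> in at_right 0. c * \<delta> powr (- D) \<le> real (grid_count A \<delta>)"
    and upper: "\<And>e. D < e \<Longrightarrow> \<exists>K. \<forall>\<^sub>F \<delta> in at_right 0. real (grid_count A \<delta>) \<le> K * \<delta> powr (- e)"
  shows "has_box_dim A D"
proof (rule has_box_dim_if_tendsto, rule order_tendstoI)
  fix y assume "y < D"
  with \<open>c > 0\<close> lower show "\<forall>\<^sub>F \<delta> in at_right 0. y < ln (real (grid_count A \<delta>)) / ln (1 / \<delta>)"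
    by (rule eventually_ln_ratio_gt_if_lower_bound)
next
  fix y assume "D < y"
  then obtain K where K: "\<forall>\<^sub>F \<delta> in at_right 0. real (grid_count A \<delta>) \<le> K * \<delta> powr (- ((D + y) / 2))"
    using upper[of "(D + y) / 2"] by auto
  have "\<forall>\<^sub>F \<delta> in at_right 0. 0 < real (grid_count A \<delta>)"
    using lower eventually_at_right_less[of 0]
  proof eventually_elim
    case (elim \<delta>)
    have "0 < c * \<delta> powr (- D)" using \<open>c > 0\<close> elim(2) by simp
    then show ?case using elim(1) by linarith
  qed
  then show "\<forall>\<^sub>F \<delta> in at_right 0. ln (real (grid_count A \<delta>)) / ln (1 / \<delta>) < y"
    by (rule eventually_ln_ratio_lt_if_upper_bound[OF _ K]) (use \<open>D < y\<close> in simp)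
qed

section \<open>Grid cells meeting a set or a graph\<close>

definition grid_cells :: "(real \<times> real) set \<Rightarrow> real \<Rightarrow> (int \<times> int) set" where
  "grid_cells A \<delta> = {m. \<exists>p \<in> A.
      of_int (fst m) * \<delta> \<le> fst p \<and> fst p \<le> (of_int (fst m) + 1) * \<delta> \<and>
      of_int (snd m) * \<delta> \<le> snd p \<and> snd p \<le> (of_int (snd m) + 1) * \<delta>}"

lemma grid_count_eq_card: "grid_count A \<delta> = card (grid_cells A \<delta>)"
  by (simp add: grid_count_def grid_cells_def)

lemma floor_divide_mult_bounds:
  fixes y \<delta> :: real
  assumes "\<delta> > 0"
  shows "of_int \<lfloor>y / \<delta>\<rfloor> * \<delta> \<le> y" "y \<le> (of_int \<lfloor>y / \<delta>\<rfloor> + 1) * \<delta>"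
proof -
  have "of_int \<lfloor>y / \<delta>\<rfloor> \<le> y / \<delta>" by linarith
  then show "of_int \<lfloor>y / \<delta>\<rfloor> * \<delta> \<le> y" using assms by (simp add: le_divide_eq)
  have "y / \<delta> \<le> of_int \<lfloor>y / \<delta>\<rfloor> + 1" by linarith
  from mult_right_mono[OF this less_imp_le[OF assms]]
  show "y \<le> (of_int \<lfloor>y / \<delta>\<rfloor> + 1) * \<delta>" using assms by simp
qed

lemma floor_cell_in_grid_cells:
  assumes "p \<in> A" "\<delta> > 0"
  shows "(\<lfloor>fst p / \<delta>\<rfloor>, \<lfloor>snd p / \<delta>\<rfloor>) \<in> grid_cells A \<delta>"
  using assms floor_divide_mult_bounds[OF assms(2)] unfolding grid_cells_def by auto

lemma cell_index_bounds:
  fixes \<delta> x a b :: real and m :: int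
  assumes "\<delta> > 0" "of_int m * \<delta> \<le> x" "x \<le> (of_int m + 1) * \<delta>" "a \<le> x" "x \<le> b"
  shows "m \<in> {\<lfloor>a / \<delta>\<rfloor> - 1 .. \<lceil>b / \<delta>\<rceil>}"
proof -
  have "of_int m \<le> b / \<delta>" "a / \<delta> \<le> of_int m + 1"
    using assms by (simp_all add: field_simps)
  then show ?thesis by (simp add: floor_le_iff le_ceiling_iff) linarith
qed

lemma finite_grid_cells:
  assumes "A \<subseteq> {a..b} \<times> {c..d}" "\<delta> > 0"
  shows "finite (grid_cells A \<delta>)"
proof (rule finite_subset)
  show "grid_cells A \<delta> \<subseteq> {\<lfloor>a / \<delta>\<rfloor> - 1 .. \<lceil>b / \<delta>\<rceil>} \<times> {\<lfloor>c / \<delta>\<rfloor> - 1 .. \<lceil>d / \<delta>\<rceil>}"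
    using assms cell_index_bounds[OF assms(2)] unfolding grid_cells_def by fastforce
qed simp

lemma coarse_cell_index_bounds:
  fixes x \<delta> \<delta>' :: real and m' :: int
  assumes d: "0 < \<delta>" "\<delta> \<le> \<delta>'" and m': "of_int m' * \<delta>' \<le> x" "x \<le> (of_int m' + 1) * \<delta>'"
  shows "m' \<in> {\<lceil>of_int \<lfloor>x / \<delta>\<rfloor> * \<delta> / \<delta>' - 1\<rceil> .. \<lfloor>of_int \<lfloor>x / \<delta>\<rfloor> * \<delta> / \<delta>' + 1\<rfloor>}"
proof -
  define r where "r = of_int \<lfloor>x / \<delta>\<rfloor> * \<delta> / \<delta>'"
  have x: "of_int \<lfloor>x / \<delta>\<rfloor> * \<delta> \<le> x" "x \<le> of_int \<lfloor>x / \<delta>\<rfloor> * \<delta> + \<delta>'"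
    using floor_divide_mult_bounds[OF d(1), of x] d by (auto simp: algebra_simps)
  have "of_int m' \<le> r + 1" "r - 1 \<le> of_int m'"
    using x m' d unfolding r_def by (simp_all add: field_simps)
  then have "\<lceil>r - 1\<rceil> \<le> m'" "m' \<le> \<lfloor>r + 1\<rfloor>" by (simp_all only: ceiling_le_iff le_floor_iff)
  then show ?thesis unfolding r_def by simp
qed

lemma card_int_interval_le_3: "card {\<lceil>(r::real) - 1\<rceil> .. \<lfloor>r + 1\<rfloor>} \<le> 3"
proof -
  have "\<lfloor>r + 1\<rfloor> - \<lceil>r - 1\<rceil> + 1 \<le> 3" by linarith
  then show ?thesis by (simp only: card_atLeastAtMost_int nat_le_iff)
qed

lemma card_grid_cells_coarser:
  assumes fin: "finite (grid_cells A \<delta>)" and d: "0 < \<delta>" "\<delta> \<le> \<delta>'"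
  shows "card (grid_cells A \<delta>') \<le> 9 * card (grid_cells A \<delta>)"
proof -
  define F where "F m = {\<lceil>of_int (fst m) * \<delta> / \<delta>' - 1\<rceil> .. \<lfloor>of_int (fst m) * \<delta> / \<delta>' + 1\<rfloor>} \<times>
     {\<lceil>of_int (snd m) * \<delta> / \<delta>' - 1\<rceil> .. \<lfloor>of_int (snd m) * \<delta> / \<delta>' + 1\<rfloor>}" for m :: "int \<times> int"
  have "grid_cells A \<delta>' \<subseteq> (\<Union>m\<in>grid_cells A \<delta>. F m)"
  proof
    fix m' assume "m' \<in> grid_cells A \<delta>'"
    then obtain p where p: "p \<in> A" "of_int (fst m') * \<delta>' \<le> fst p" "fst p \<le> (of_int (fst m') + 1) * \<delta>'"
      "of_int (snd m') * \<delta>' \<le> snd p" "snd p \<le> (of_int (snd m') + 1) * \<delta>'"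
      unfolding grid_cells_def by auto
    then have "m' \<in> F (\<lfloor>fst p / \<delta>\<rfloor>, \<lfloor>snd p / \<delta>\<rfloor>)" unfolding F_def
      using coarse_cell_index_bounds[OF d p(2,3)] coarse_cell_index_bounds[OF d p(4,5)]
      by (cases m') auto
    then show "m' \<in> (\<Union>m\<in>grid_cells A \<delta>. F m)"
      using floor_cell_in_grid_cells[OF p(1) d(1)] by auto
  qed
  then have "card (grid_cells A \<delta>') \<le> card (\<Union>m\<in>grid_cells A \<delta>. F m)"
    by (rule card_mono[rotated]) (use fin in \<open>auto simp: F_def\<close>)
  also have "\<dots> \<le> (\<Sum>m\<in>grid_cells A \<delta>. card (F m))" by (rule card_UN_le[OF fin])
  also have "\<dots> \<le> (\<Sum>m\<in>grid_cells A \<delta>. 3 * 3)"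
    unfolding F_def card_cartesian_product by (intro sum_mono mult_le_mono card_int_interval_le_3)
  finally show ?thesis by simp
qed

lemma graph_on_subset:
  assumes "\<And>x. x \<in> U \<Longrightarrow> \<bar>f x\<bar> \<le> B"
  shows "graph_on U f \<subseteq> U \<times> {-B..B}"
proof
  fix p assume "p \<in> graph_on U f"
  then obtain u where "p = (u, f u)" "u \<in> U" by (auto simp: graph_on_def)
  then show "p \<in> U \<times> {-B..B}" using assms[of u] by (auto simp: abs_le_iff)
qed

lemma finite_grid_cells_graph:
  assumes "\<And>x. x \<in> {a..b} \<Longrightarrow> \<bar>f x\<bar> \<le> B" "\<delta> > 0"
  shows "finite (grid_cells (graph_on {a..b} f) \<delta>)"
  using finite_grid_cells[OF graph_on_subset[OF assms(1)] assms(2)] .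

lemma mem_grid_cells_graph_iff:
  "(i, k) \<in> grid_cells (graph_on U f) \<delta> \<longleftrightarrow> (\<exists>x\<in>U. of_int i * \<delta> \<le> x \<and> x \<le> (of_int i + 1) * \<delta> \<and>
      of_int k * \<delta> \<le> f x \<and> f x \<le> (of_int k + 1) * \<delta>)"
  unfolding grid_cells_def graph_on_def by auto

lemma real_grid_count_graph_ge:
  fixes f :: "real \<Rightarrow> real"
  assumes fin: "finite (grid_cells (graph_on {0..b} f) \<delta>)" and "b \<ge> 0" "\<delta> > 0"
  shows "b / \<delta> \<le> real (grid_count (graph_on {0..b} f) \<delta>)"
proof -
  define n where "n = nat \<lfloor>b / \<delta>\<rfloor>"
  have n: "real n = of_int \<lfloor>b / \<delta>\<rfloor>" unfolding n_def using assms by simp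
  define h where "h i = (int i, \<lfloor>f (real i * \<delta>) / \<delta>\<rfloor>)" for i :: nat
  have "h ` {..n} \<subseteq> grid_cells (graph_on {0..b} f) \<delta>"
  proof (rule image_subsetI)
    fix i assume "i \<in> {..n}"
    then have "real i \<le> b / \<delta>" using n by simp linarith
    then have "(real i * \<delta>, f (real i * \<delta>)) \<in> graph_on {0..b} f"
      using assms by (auto simp: graph_on_def field_simps)
    from floor_cell_in_grid_cells[OF this \<open>\<delta> > 0\<close>]
    show "h i \<in> grid_cells (graph_on {0..b} f) \<delta>" unfolding h_def using \<open>\<delta> > 0\<close> by simp
  qed
  moreover have "inj_on h {..n}" unfolding h_def inj_on_def by auto
  ultimately have "card {..n} \<le> grid_count (graph_on {0..b} f) \<delta>"
    unfolding grid_count_eq_card using fin by (metis card_image card_mono)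
  moreover have "b / \<delta> \<le> real (card {..n})" using n by simp linarith
  ultimately show ?thesis by linarith
qed

lemma card_grid_column_le:
  fixes f :: "real \<Rightarrow> real"
  assumes "\<delta> > 0" "W \<ge> 0"
    and osc: "\<And>x y. x \<in> U \<Longrightarrow> y \<in> U \<Longrightarrow> \<bar>x - y\<bar> \<le> \<delta> \<Longrightarrow> \<bar>f x - f y\<bar> \<le> W"
  shows "real (card {k. (i, k) \<in> grid_cells (graph_on U f) \<delta>}) \<le> 2 * W / \<delta> + 2"
proof (cases "{k. (i, k) \<in> grid_cells (graph_on U f) \<delta>} = {}")
  case True
  then show ?thesis using assms by simp
next
  case False
  then obtain x0 where x0: "x0 \<in> U" "of_int i * \<delta> \<le> x0" "x0 \<le> (of_int i + 1) * \<delta>"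
    by (auto simp: mem_grid_cells_graph_iff)
  define lo where "lo = (f x0 - W) / \<delta> - 1"
  define hi where "hi = (f x0 + W) / \<delta>"
  have "{k. (i, k) \<in> grid_cells (graph_on U f) \<delta>} \<subseteq> {\<lceil>lo\<rceil> .. \<lfloor>hi\<rfloor>}"
  proof clarify
    fix k assume "(i, k) \<in> grid_cells (graph_on U f) \<delta>"
    then obtain x where x: "x \<in> U" "of_int i * \<delta> \<le> x" "x \<le> (of_int i + 1) * \<delta>"
      "of_int k * \<delta> \<le> f x" "f x \<le> (of_int k + 1) * \<delta>"
      by (auto simp: mem_grid_cells_graph_iff)
    have "\<bar>x - x0\<bar> \<le> \<delta>" using x x0 by (simp add: algebra_simps abs_le_iff)
    then have "\<bar>f x - f x0\<bar> \<le> W" using osc x(1) x0(1) by blast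
    then have "of_int k \<le> hi" "lo \<le> of_int k"
      unfolding hi_def lo_def using x(4,5) \<open>\<delta> > 0\<close> by (simp_all add: field_simps abs_le_iff)
    then show "k \<in> {\<lceil>lo\<rceil> .. \<lfloor>hi\<rfloor>}" by (simp add: le_floor_iff ceiling_le_iff)
  qed
  then have "card {k. (i, k) \<in> grid_cells (graph_on U f) \<delta>} \<le> nat (\<lfloor>hi\<rfloor> - \<lceil>lo\<rceil> + 1)"
    using card_mono[of "{\<lceil>lo\<rceil> .. \<lfloor>hi\<rfloor>}"] by simp
  moreover have "hi - lo + 1 = 2 * W / \<delta> + 2"
    unfolding hi_def lo_def using \<open>\<delta> > 0\<close> by (simp add: field_simps)
  moreover have "real (nat (\<lfloor>hi\<rfloor> - \<lceil>lo\<rceil> + 1)) \<le> max 0 (hi - lo + 1)"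
    by (cases "\<lfloor>hi\<rfloor> - \<lceil>lo\<rceil> + 1 \<ge> 0") linarith+
  ultimately show ?thesis using assms by (simp add: max_def split: if_splits)
qed

lemma real_grid_count_graph_le:
  fixes f :: "real \<Rightarrow> real"
  assumes fin: "finite (grid_cells (graph_on {0..b} f) \<delta>)" and "b \<ge> 0" "\<delta> > 0"
    and osc: "\<And>x y. x \<in> {0..b} \<Longrightarrow> y \<in> {0..b} \<Longrightarrow> \<bar>x - y\<bar> \<le> \<delta> \<Longrightarrow> \<bar>f x - f y\<bar> \<le> W"
  shows "real (grid_count (graph_on {0..b} f) \<delta>) \<le> (b / \<delta> + 3) * (2 * W / \<delta> + 2)"
proof -
  define G where "G = grid_cells (graph_on {0..b} f) \<delta>"
  define I where "I = {-1 .. \<lceil>b / \<delta>\<rceil>}"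
  define col where "col i = {k. (i, k) \<in> G}" for i
  have W: "W \<ge> 0" using osc[of 0 0] assms by simp
  have col: "real (card (col i)) \<le> 2 * W / \<delta> + 2" for i
    unfolding col_def G_def by (rule card_grid_column_le[OF \<open>\<delta> > 0\<close> W]) (fact osc)
  have fin_col: "finite (col i)" for i
    using fin unfolding col_def G_def by (rule finite_subset[rotated, OF finite_imageI]) force
  have "G \<subseteq> (\<Union>i\<in>I. Pair i ` col i)"
  proof (rule subsetI, clarify)
    fix i k assume "(i, k) \<in> G"
    then obtain x where "x \<in> {0..b}" "of_int i * \<delta> \<le> x" "x \<le> (of_int i + 1) * \<delta>"
      unfolding G_def mem_grid_cells_graph_iff by blast
    then have "i \<in> I" unfolding I_def using cell_index_bounds[of \<delta> i x 0 b] \<open>\<delta> > 0\<close> by auto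
    then show "(i, k) \<in> (\<Union>i\<in>I. Pair i ` col i)" using \<open>(i, k) \<in> G\<close> unfolding col_def by auto
  qed
  then have "card G \<le> card (\<Union>i\<in>I. Pair i ` col i)"
    by (rule card_mono[rotated]) (simp add: I_def fin_col)
  also have "\<dots> \<le> (\<Sum>i\<in>I. card (Pair i ` col i))" by (rule card_UN_le) (simp add: I_def)
  also have "\<dots> = (\<Sum>i\<in>I. card (col i))" by (intro sum.cong refl) (simp add: card_image inj_on_def)
  finally have "real (card G) \<le> (\<Sum>i\<in>I. real (card (col i)))" by (simp flip: of_nat_sum)
  also have "\<dots> \<le> (\<Sum>i\<in>I. 2 * W / \<delta> + 2)" by (rule sum_mono) (rule col)
  also have "\<dots> = real (card I) * (2 * W / \<delta> + 2)" by simp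
  also have "\<dots> \<le> (b / \<delta> + 3) * (2 * W / \<delta> + 2)"
  proof (rule mult_right_mono)
    have "0 \<le> b / \<delta>" using assms by simp
    then have "0 \<le> \<lceil>b / \<delta>\<rceil>" by simp
    then have "real (card I) = of_int \<lceil>b / \<delta>\<rceil> + 2" unfolding I_def by simp
    then show "real (card I) \<le> b / \<delta> + 3" by linarith
  qed (use W \<open>\<delta> > 0\<close> in simp)
  finally show ?thesis unfolding G_def grid_count_eq_card .
qed

lemma real_grid_count_graph_le_hoelder:
  fixes f :: "real \<Rightarrow> real"
  assumes fin: "finite (grid_cells (graph_on {0..b} f) \<delta>)"
    and "b \<ge> 0" "0 < \<delta>" "\<delta> \<le> 1" "0 < a" "a \<le> 1" "C \<ge> 0"
    and hoelder: "\<And>x y. x \<in> {0..b} \<Longrightarrow> y \<in> {0..b} \<Longrightarrow> \<bar>f x - f y\<bar> \<le> C * \<bar>x - y\<bar> powr a"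
  shows "real (grid_count (graph_on {0..b} f) \<delta>) \<le> (b + 3) * (2 * C + 2) * \<delta> powr (a - 2)"
proof -
  have osc: "\<bar>f x - f y\<bar> \<le> C * \<delta> powr a"
    if "x \<in> {0..b}" "y \<in> {0..b}" "\<bar>x - y\<bar> \<le> \<delta>" for x y
    using hoelder[OF that(1,2)] mult_left_mono[OF powr_mono2[OF _ _ that(3)] \<open>C \<ge> 0\<close>] assms
    by (meson abs_ge_zero less_imp_le order_trans)
  have "real (grid_count (graph_on {0..b} f) \<delta>) \<le> (b / \<delta> + 3) * (2 * (C * \<delta> powr a) / \<delta> + 2)"
    by (rule real_grid_count_graph_le[OF fin assms(2,3)]) (fact osc)
  also have "\<dots> \<le> ((b + 3) / \<delta>) * ((2 * C + 2) * \<delta> powr (a - 1))"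
  proof (rule mult_mono)
    show "b / \<delta> + 3 \<le> (b + 3) / \<delta>" using assms by (simp add: field_simps)
    have "1 \<le> \<delta> powr (a - 1)" using powr_mono2'[of "a - 1" \<delta> 1] assms by simp
    have "2 * (C * \<delta> powr a) / \<delta> + 2 = 2 * C * \<delta> powr (a - 1) + 2"
      using assms by (simp add: powr_diff)
    also have "\<dots> \<le> 2 * C * \<delta> powr (a - 1) + 2 * \<delta> powr (a - 1)"
      using \<open>1 \<le> \<delta> powr (a - 1)\<close> by simp
    finally show "2 * (C * \<delta> powr a) / \<delta> + 2 \<le> (2 * C + 2) * \<delta> powr (a - 1)"
      by (simp add: algebra_simps)
  qed (use assms in auto)
  also have "\<dots> = (b + 3) * (2 * C + 2) * (\<delta> powr (a - 1) / \<delta>)" by simp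
  also have "\<delta> powr (a - 1) / \<delta> = \<delta> powr (a - 2)"
    using powr_diff[of \<delta> "a - 1" 1] \<open>0 < \<delta>\<close> by simp
  finally show ?thesis .
qed

section \<open>Fourier coefficients versus grid cells\<close>

lemma cos_has_integral_period:
  assumes "K * l = 2 * pi" "l > 0"
  shows "((\<lambda>x. cos (K * x)) has_integral 0) {u..u+l}"
proof -
  have "K \<noteq> 0" using assms by auto
  then have "((\<lambda>x. sin (K * x) / K) has_vector_derivative cos (K * x)) (at x within {u..u+l})" for x
    by (auto intro!: derivative_eq_intros simp flip: has_real_derivative_iff_has_vector_derivative)
  then have "((\<lambda>x. cos (K * x)) has_integral (sin (K * (u + l)) / K - sin (K * u) / K)) {u..u+l}"
    using assms by (intro fundamental_theorem_of_calculus) auto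
  moreover have "K * (u + l) = K * u + 2 * pi" using assms by (simp add: algebra_simps)
  ultimately show ?thesis by (simp add: sin_periodic)
qed

lemma abs_integral_cos_period_le:
  fixes f :: "real \<Rightarrow> real"
  assumes cont: "continuous_on {u..u+l} f" and "l > 0" "K * l = 2 * pi"
    and W: "\<And>x. x \<in> {u..u+l} \<Longrightarrow> \<bar>f x - f u\<bar> \<le> W"
  shows "\<bar>integral {u..u+l} (\<lambda>x. f x * cos (K * x))\<bar> \<le> W * l"
proof -
  define g where "g x = (f x - f u) * cos (K * x)" for x
  have "g integrable_on {u..u+l}"
    unfolding g_def using cont by (intro integrable_continuous_real continuous_intros)
  then have g: "(g has_integral integral {u..u+l} g) (cbox u (u+l))"
    by (simp add: has_integral_integral)
  have "norm (g x) \<le> W" if "x \<in> cbox u (u+l)" for x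
    unfolding g_def norm_mult real_norm_def
    using W[of x] that mult_mono[of _ W "\<bar>cos (K * x)\<bar>" 1] by (simp add: abs_mult)
  then have "norm (integral {u..u+l} g) \<le> W * l"
    using has_integral_bound[OF _ g] W[of u] \<open>l > 0\<close> by simp
  moreover have "((\<lambda>x. g x + f u * cos (K * x)) has_integral integral {u..u+l} g + f u * 0) {u..u+l}"
    using g cos_has_integral_period[OF assms(3,2)] by (intro has_integral_add has_integral_mult_right) auto
  then have "integral {u..u+l} (\<lambda>x. f x * cos (K * x)) = integral {u..u+l} g"
    unfolding g_def by (simp add: algebra_simps integral_unique)
  ultimately show ?thesis by simp
qed

text \<open>By the intermediate value theorem \<open>f\<close> meets every horizontal strip between \<open>f u\<close> and \<open>f x\<close>.\<close>
lemma continuous_oscillation_le_card_strips: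
  fixes f :: "real \<Rightarrow> real" and C :: "int set"
  assumes cont: "continuous_on {u..v} f" and "l > 0" "finite C"
    and hit: "\<And>k y. y \<in> {u..v} \<Longrightarrow> of_int k * l \<le> f y \<Longrightarrow> f y \<le> (of_int k + 1) * l \<Longrightarrow> k \<in> C"
    and x: "x \<in> {u..v}"
  shows "\<bar>f x - f u\<bar> \<le> l * real (card C)"
proof -
  define lo where "lo = min (f u) (f x)"
  define hi where "hi = max (f u) (f x)"
  have ivt: "\<exists>z\<in>{u..v}. f z = y" if "lo \<le> y" "y \<le> hi" for y
  proof -
    have "continuous_on {u..x} f" "u \<le> x" using x by (auto intro: continuous_on_subset[OF cont])
    moreover have "f u \<le> y \<and> y \<le> f x \<or> f x \<le> y \<and> y \<le> f u"
      using that unfolding lo_def hi_def by linarith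
    ultimately obtain z where "u \<le> z" "z \<le> x" "f z = y"
      using IVT'[of f u y x] IVT2'[of f x y u] by blast
    then show ?thesis using x by auto
  qed
  have "{\<lfloor>lo / l\<rfloor>..\<lfloor>hi / l\<rfloor>} \<subseteq> C"
  proof
    fix k assume k: "k \<in> {\<lfloor>lo / l\<rfloor>..\<lfloor>hi / l\<rfloor>}"
    define y where "y = max lo (of_int k * l)"
    have "of_int k * l \<le> hi" "lo < (of_int k + 1) * l"
      using k \<open>l > 0\<close> by (auto simp: le_floor_iff floor_le_iff field_simps)
    then have "lo \<le> y" "y \<le> hi" "of_int k * l \<le> y" "y \<le> (of_int k + 1) * l"
      unfolding y_def using \<open>l > 0\<close> by (auto simp: lo_def hi_def)
    with ivt hit show "k \<in> C" by metis
  qed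
  then have "card {\<lfloor>lo / l\<rfloor>..\<lfloor>hi / l\<rfloor>} \<le> card C" using \<open>finite C\<close> by (rule card_mono[rotated])
  moreover have "hi / l - lo / l < of_int (\<lfloor>hi / l\<rfloor> - \<lfloor>lo / l\<rfloor> + 1)" by simp linarith
  ultimately have "(hi - lo) / l \<le> real (card C)" by (simp add: diff_divide_distrib)
  moreover have "\<bar>f x - f u\<bar> = hi - lo" unfolding hi_def lo_def by auto
  ultimately show ?thesis using \<open>l > 0\<close> by (simp add: field_simps)
qed

lemma integral_sum_columns:
  fixes g :: "real \<Rightarrow> real"
  assumes "g integrable_on {0..b}" "l > 0" "real n * l \<le> b"
  shows "integral {0..real n * l} g = (\<Sum>i<n. integral {real i * l .. real i * l + l} g)"
  using assms(3)
proof (induction n)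
  case (Suc n)
  have "real n * l \<le> real (Suc n) * l" using \<open>l > 0\<close> by simp
  then have IH: "integral {0..real n * l} g = (\<Sum>i<n. integral {real i * l .. real i * l + l} g)"
    using Suc by simp
  have "real n * l \<le> real (Suc n) * l" using \<open>l > 0\<close> by simp
  moreover have "g integrable_on {0..real (Suc n) * l}"
    using Suc.prems by (intro integrable_on_subinterval[OF assms(1)]) auto
  ultimately have "integral {0..real n * l} g + integral {real n * l..real (Suc n) * l} g
      = integral {0..real (Suc n) * l} g"
    using \<open>l > 0\<close> by (intro Henstock_Kurzweil_Integration.integral_combine) auto
  then show ?case using IH by (simp add: algebra_simps)
qed simp

lemma abs_integral_cos_column_le:
  fixes f :: "real \<Rightarrow> real"
  assumes cont: "continuous_on {0..b} f" and fin: "finite (grid_cells (graph_on {0..b} f) l)"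
    and "l > 0" "K * l = 2 * pi" "0 \<le> u" "u + l \<le> b" "u = real i * l"
  shows "\<bar>integral {u..u+l} (\<lambda>x. f x * cos (K * x))\<bar>
           \<le> l\<^sup>2 * real (card {k. (int i, k) \<in> grid_cells (graph_on {0..b} f) l})"
proof -
  define col where "col = {k. (int i, k) \<in> grid_cells (graph_on {0..b} f) l}"
  have "finite col"
    using fin unfolding col_def by (rule finite_subset[rotated, OF finite_imageI]) force
  have sub: "{u..u+l} \<subseteq> {0..b}" using assms by auto
  then have cc: "continuous_on {u..u+l} f" using cont by (rule continuous_on_subset[rotated])
  have "\<bar>f x - f u\<bar> \<le> l * real (card col)" if "x \<in> {u..u+l}" for x
  proof (rule continuous_oscillation_le_card_strips[OF cc \<open>l > 0\<close> \<open>finite col\<close> _ that])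
    fix k y assume y: "y \<in> {u..u+l}" "of_int k * l \<le> f y" "f y \<le> (of_int k + 1) * l"
    then have "y \<in> {0..b}" using sub by blast
    with y show "k \<in> col" unfolding col_def mem_grid_cells_graph_iff \<open>u = real i * l\<close>
      by (auto simp: algebra_simps)
  qed
  from abs_integral_cos_period_le[OF cc \<open>l > 0\<close> \<open>K * l = 2 * pi\<close> this]
  show ?thesis unfolding col_def by (simp add: power2_eq_square mult_ac)
qed

lemma sum_card_columns_le_card:
  fixes G :: "(int \<times> int) set"
  assumes "finite G"
  shows "(\<Sum>i<n. card {k. (int i, k) \<in> G}) \<le> card G"
proof -
  have fin: "finite {k. (int i, k) \<in> G}" for i
    using assms by (rule finite_subset[rotated, OF finite_imageI]) force
  have "(\<Sum>i<n. card {k. (int i, k) \<in> G}) = card (\<Union>i<n. Pair (int i) ` {k. (int i, k) \<in> G})"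
    by (subst card_UN_disjoint) (auto simp: fin card_image inj_on_def)
  also have "\<dots> \<le> card G" by (rule card_mono[OF assms]) auto
  finally show ?thesis .
qed

lemma abs_integral_mult_cos_le:
  fixes f :: "real \<Rightarrow> real"
  assumes "continuous_on {a..b} f" "a \<le> b" and bound: "\<And>x. x \<in> {a..b} \<Longrightarrow> \<bar>f x\<bar> \<le> B"
  shows "\<bar>integral {a..b} (\<lambda>x. f x * cos (K * x))\<bar> \<le> B * (b - a)"
proof -
  have "B \<ge> 0" using bound[of a] \<open>a \<le> b\<close> by simp
  have "norm (f x * cos (K * x)) \<le> B" if "x \<in> cbox a b" for x
    using bound[of x] that mult_mono[of _ B "\<bar>cos (K * x)\<bar>" 1] \<open>B \<ge> 0\<close> by (simp add: abs_mult)
  moreover have "(\<lambda>x. f x * cos (K * x)) integrable_on {a..b}"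
    using assms(1) by (intro integrable_continuous_real continuous_intros)
  ultimately show ?thesis
    using has_integral_bound[OF \<open>B \<ge> 0\<close>, of "\<lambda>x. f x * cos (K * x)" _ a b] \<open>a \<le> b\<close>
    by (simp add: has_integral_integral)
qed

lemma abs_integral_cos_le_grid_count:
  fixes f :: "real \<Rightarrow> real"
  assumes cont: "continuous_on {0..b} f" and bound: "\<And>x. x \<in> {0..b} \<Longrightarrow> \<bar>f x\<bar> \<le> B"
    and "b \<ge> 0" "l > 0" "K * l = 2 * pi"
  shows "\<bar>integral {0..b} (\<lambda>x. f x * cos (K * x))\<bar>
           \<le> l\<^sup>2 * real (grid_count (graph_on {0..b} f) l) + B * l"
proof -
  define G where "G = grid_cells (graph_on {0..b} f) l"
  define g where "g x = f x * cos (K * x)" for x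
  define n where "n = nat \<lfloor>b / l\<rfloor>"
  have "real n = of_int \<lfloor>b / l\<rfloor>" unfolding n_def using assms by simp
  then have "real n \<le> b / l" "b / l < real n + 1" by linarith+
  then have n: "real n * l \<le> b" "b - real n * l \<le> l"
    using \<open>l > 0\<close> by (simp_all add: field_simps)
  have fin: "finite G" unfolding G_def by (rule finite_grid_cells_graph[OF bound \<open>l > 0\<close>])
  have gi: "g integrable_on {0..b}"
    unfolding g_def using cont by (intro integrable_continuous_real continuous_intros)
  have "\<bar>integral {0..real n * l} g\<bar> \<le> (\<Sum>i<n. \<bar>integral {real i * l .. real i * l + l} g\<bar>)"
    unfolding integral_sum_columns[OF gi \<open>l > 0\<close> n(1)] by (rule sum_abs)
  also have "\<dots> \<le> (\<Sum>i<n. l\<^sup>2 * real (card {k. (int i, k) \<in> G}))"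
  proof (intro sum_mono)
    fix i assume "i \<in> {..<n}"
    then have "real i * l + l \<le> b"
      using n(1) \<open>l > 0\<close> mult_right_mono[of "real i + 1" "real n" l] by (simp add: algebra_simps)
    then show "\<bar>integral {real i * l .. real i * l + l} g\<bar> \<le> l\<^sup>2 * real (card {k. (int i, k) \<in> G})"
      unfolding g_def G_def using \<open>l > 0\<close> fin[unfolded G_def]
      by (intro abs_integral_cos_column_le[OF cont _ _ \<open>K * l = 2 * pi\<close>]) auto
  qed
  also have "\<dots> \<le> l\<^sup>2 * real (card G)"
    using sum_card_columns_le_card[OF fin, of n]
    by (simp flip: sum_distrib_left of_nat_sum add: mult_left_mono)
  finally have "\<bar>integral {0..real n * l} g\<bar> \<le> l\<^sup>2 * real (card G)" .
  moreover have "\<bar>integral {real n * l..b} g\<bar> \<le> B * l"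
  proof -
    have "{real n * l..b} \<subseteq> {0..b}" using \<open>l > 0\<close> by auto
    then have "\<bar>integral {real n * l..b} g\<bar> \<le> B * (b - real n * l)"
      unfolding g_def using n(1) bound
      by (intro abs_integral_mult_cos_le continuous_on_subset[OF cont]) auto
    also have "\<dots> \<le> B * l" using n(2) bound[of 0] \<open>b \<ge> 0\<close> by (intro mult_left_mono) auto
    finally show ?thesis .
  qed
  moreover have "integral {0..real n * l} g + integral {real n * l..b} g = integral {0..b} g"
    using \<open>l > 0\<close> by (intro Henstock_Kurzweil_Integration.integral_combine[OF _ n(1) gi]) simp
  ultimately have "\<bar>integral {0..b} g\<bar> \<le> l\<^sup>2 * real (card G) + B * l" by linarith
  then show ?thesis unfolding g_def G_def grid_count_eq_card .
qed

lemma real_grid_count_graph_ge_fourier_coeff: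
  fixes f :: "real \<Rightarrow> real"
  assumes cont: "continuous_on {0..pi} f" and bound: "\<And>x. x \<in> {0..pi} \<Longrightarrow> \<bar>f x\<bar> \<le> B"
    and X: "0 < X" "X \<le> K" "K \<le> 2 * X"
    and coeff: "A \<le> \<bar>integral {0..pi} (\<lambda>x. f x * cos (K * x))\<bar>"
  shows "A * X\<^sup>2 / (4 * pi\<^sup>2) - B / (2 * pi) * X \<le> real (grid_count (graph_on {0..pi} f) (2 * pi / K))"
proof -
  define l where "l = 2 * pi / K"
  define N where "N = real (grid_count (graph_on {0..pi} f) l)"
  have l: "0 < l" "l \<le> 2 * pi / X"
    unfolding l_def using X by (auto intro: divide_left_mono)
  have "B \<ge> 0" using bound[of 0] by simp
  have "A \<le> l\<^sup>2 * N + B * l"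
    using coeff abs_integral_cos_le_grid_count[OF cont bound _ l(1), of K] X unfolding N_def l_def by simp
  also have "\<dots> \<le> (2 * pi / X)\<^sup>2 * N + B * (2 * pi / X)"
    using l \<open>B \<ge> 0\<close> unfolding N_def by (intro add_mono mult_right_mono mult_left_mono power_mono) auto
  finally have "A * (X\<^sup>2 / (4 * pi\<^sup>2)) \<le> ((2 * pi / X)\<^sup>2 * N + B * (2 * pi / X)) * (X\<^sup>2 / (4 * pi\<^sup>2))"
    by (rule mult_right_mono) simp
  also have "\<dots> = N * ((2 * pi / X)\<^sup>2 * (X\<^sup>2 / (4 * pi\<^sup>2))) + B * ((2 * pi / X) * (X\<^sup>2 / (4 * pi\<^sup>2)))"
    by (simp add: ring_distribs mult_ac)
  also have "(2 * pi / X)\<^sup>2 * (X\<^sup>2 / (4 * pi\<^sup>2)) = 1"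
    using X(1) by (simp add: power_divide power_mult_distrib)
  also have "(2 * pi / X) * (X\<^sup>2 / (4 * pi\<^sup>2)) = X / (2 * pi)"
    using X(1) by (simp add: power2_eq_square)
  finally show ?thesis unfolding N_def l_def by simp
qed

section \<open>Series and trigonometric integrals\<close>

lemma abs_sin_diff_le: "\<bar>sin w - sin z\<bar> \<le> \<bar>w - z\<bar>" for w z :: real
proof -
  have "\<bar>sin w - sin z\<bar> = 2 * \<bar>sin ((w - z) / 2)\<bar> * \<bar>cos ((w + z) / 2)\<bar>"
    by (simp add: sin_diff_sin abs_mult)
  also have "\<dots> \<le> 2 * \<bar>(w - z) / 2\<bar> * 1"
    by (intro mult_mono abs_sin_x_le_abs_x) auto
  finally show ?thesis by simp
qed

lemma abs_sin_diff_le_powr: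
  fixes w z a :: real
  assumes "0 < a" "a \<le> 1"
  shows "\<bar>sin w - sin z\<bar> \<le> 2 powr (1 - a) * \<bar>w - z\<bar> powr a"
proof (cases "\<bar>w - z\<bar> \<le> 2")
  case True
  have "\<bar>sin w - sin z\<bar> \<le> \<bar>w - z\<bar> powr (1 - a) * \<bar>w - z\<bar> powr a"
  proof (cases "w = z")
    case False
    then show ?thesis using abs_sin_diff_le[of w z] by (simp flip: powr_add)
  qed simp
  also have "\<dots> \<le> 2 powr (1 - a) * \<bar>w - z\<bar> powr a"
    using True assms by (intro mult_right_mono powr_mono2) auto
  finally show ?thesis .
next
  case False
  have "\<bar>sin w - sin z\<bar> \<le> 2"
    using abs_triangle_ineq4[of "sin w" "sin z"] abs_sin_le_one[of w] abs_sin_le_one[of z] by linarith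
  also have "2 = 2 powr (1 - a) * 2 powr a" by (simp flip: powr_add)
  also have "\<dots> \<le> 2 powr (1 - a) * \<bar>w - z\<bar> powr a"
    using False assms by (intro mult_left_mono powr_mono2) auto
  finally show ?thesis .
qed

lemma continuous_on_suminf_M_test:
  fixes f :: "nat \<Rightarrow> 'a::topological_space \<Rightarrow> 'b::banach"
  assumes "\<And>n. continuous_on A (f n)" "\<And>n x. x \<in> A \<Longrightarrow> norm (f n x) \<le> M n" "summable M"
  shows "continuous_on A (\<lambda>x. \<Sum>n. f n x)"
  using assms(1) by (intro uniform_limit_theorem[OF _ Weierstrass_m_test[OF assms(2,3)]])
    (simp_all add: always_eventually continuous_on_sum)

lemma has_integral_suminf_M_test:
  fixes f :: "nat \<Rightarrow> real \<Rightarrow> 'c::euclidean_space"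
  assumes cont: "\<And>n. continuous_on {a..b} (f n)"
    and bound: "\<And>n x. x \<in> {a..b} \<Longrightarrow> norm (f n x) \<le> M n" and "summable M"
  shows "((\<lambda>x. \<Sum>n. f n x) has_integral (\<Sum>n. integral {a..b} (f n))) {a..b}"
proof -
  have "uniform_limit {a..b} (\<lambda>n x. \<Sum>i<n. f i x) (\<lambda>x. \<Sum>i. f i x) sequentially"
    using Weierstrass_m_test[OF bound \<open>summable M\<close>] .
  moreover have "continuous_on {a..b} (\<lambda>x. \<Sum>i<n. f i x)" for n
    using cont by (simp add: continuous_on_sum)
  ultimately obtain I J where I: "\<And>n. ((\<lambda>x. \<Sum>i<n. f i x) has_integral I n) {a..b}"
    and J: "((\<lambda>x. \<Sum>i. f i x) has_integral J) {a..b}" and "I \<longlonglongrightarrow> J"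
    by (rule uniform_limit_integral) auto
  have "((\<lambda>x. \<Sum>i<n. f i x) has_integral (\<Sum>i<n. integral {a..b} (f i))) {a..b}" for n
    using cont by (intro has_integral_sum) (auto intro: integrable_continuous_real)
  then have "I = (\<lambda>n. \<Sum>i<n. integral {a..b} (f i))"
    using I by (auto intro: has_integral_unique)
  then have "(\<lambda>i. integral {a..b} (f i)) sums J"
    using \<open>I \<longlonglongrightarrow> J\<close> by (simp add: sums_def)
  then show ?thesis using J by (simp add: sums_iff)
qed

lemma has_integral_suminf_mult_suminf:
  fixes u v :: "nat \<Rightarrow> real \<Rightarrow> 'c::{euclidean_space, real_normed_algebra}"
  assumes cont: "\<And>n. continuous_on {a..b} (u n)" "\<And>n. continuous_on {a..b} (v n)"
    and bound: "\<And>n x. x \<in> {a..b} \<Longrightarrow> norm (u n x) \<le> U n" "\<And>n x. x \<in> {a..b} \<Longrightarrow> norm (v n x) \<le> V n"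
    and "summable U" "summable V"
  shows "((\<lambda>x. (\<Sum>n. u n x) * (\<Sum>m. v m x)) has_integral
           (\<Sum>n. \<Sum>m. integral {a..b} (\<lambda>x. u n x * v m x))) {a..b}"
proof -
  have norm_mult_le: "norm (y * z) \<le> Y * Z" if "norm y \<le> Y" "norm z \<le> Z" for y z :: 'c and Y Z
    using that norm_mult_ineq[of y z] by (meson mult_mono norm_ge_zero order_trans)
  have inner: "((\<lambda>x. u n x * (\<Sum>m. v m x)) has_integral
      (\<Sum>m. integral {a..b} (\<lambda>x. u n x * v m x))) {a..b}" for n
  proof -
    have int: "((\<lambda>x. \<Sum>m. u n x * v m x) has_integral (\<Sum>m. integral {a..b} (\<lambda>x. u n x * v m x))) {a..b}"
    proof (rule has_integral_suminf_M_test[where f = "\<lambda>m x. u n x * v m x"])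
      show "continuous_on {a..b} (\<lambda>x. u n x * v m x)" for m
        using cont by (intro continuous_intros)
      show "norm (u n x * v m x) \<le> U n * V m" if "x \<in> {a..b}" for m x
        using bound[OF that] by (rule norm_mult_le)
    qed (use \<open>summable V\<close> in \<open>rule summable_mult\<close>)
    have eq: "u n x * (\<Sum>m. v m x) = (\<Sum>m. u n x * v m x)" if "x \<in> {a..b}" for x
    proof -
      have "summable (\<lambda>m. v m x)"
        by (rule summable_comparison_test'[of V 0]) (use bound(2)[OF that] \<open>summable V\<close> in auto)
      then show ?thesis by (rule suminf_mult[symmetric])
    qed
    show ?thesis using int by (simp only: has_integral_cong[OF eq])
  qed
  have int: "((\<lambda>x. \<Sum>n. u n x * (\<Sum>m. v m x)) has_integral
      (\<Sum>n. integral {a..b} (\<lambda>x. u n x * (\<Sum>m. v m x)))) {a..b}"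
  proof (rule has_integral_suminf_M_test)
    have "continuous_on {a..b} (\<lambda>x. \<Sum>m. v m x)"
      by (rule continuous_on_suminf_M_test[OF cont(2) bound(2) \<open>summable V\<close>])
    then show "continuous_on {a..b} (\<lambda>x. u n x * (\<Sum>m. v m x))" for n
      using cont(1) by (intro continuous_intros)
    show "norm (u n x * (\<Sum>m. v m x)) \<le> U n * (\<Sum>m. V m)" if "x \<in> {a..b}" for n x
      using bound(1)[OF that] norm_suminf_le[OF bound(2)[OF that] \<open>summable V\<close>] by (rule norm_mult_le)
  qed (use \<open>summable U\<close> in \<open>rule summable_mult2\<close>)
  have eq: "(\<Sum>n. u n x) * (\<Sum>m. v m x) = (\<Sum>n. u n x * (\<Sum>m. v m x))" if "x \<in> {a..b}" for x
  proof -
    have "summable (\<lambda>n. u n x)"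
      by (rule summable_comparison_test'[of U 0]) (use bound(1)[OF that] \<open>summable U\<close> in auto)
    then show ?thesis by (rule suminf_mult2)
  qed
  show ?thesis using int unfolding integral_unique[OF inner] by (simp only: has_integral_cong[OF eq])
qed

lemma cos_int_mult_has_integral:
  "((\<lambda>x. cos (of_int j * x)) has_integral pi * of_bool (j = 0)) {0..pi}"
proof (cases "j = 0")
  case False
  then have "((\<lambda>x. sin (of_int j * x) / of_int j) has_vector_derivative cos (of_int j * x))
      (at x within {0..pi})" for x
    by (auto intro!: derivative_eq_intros simp flip: has_real_derivative_iff_has_vector_derivative)
  then have "((\<lambda>x. cos (of_int j * x)) has_integral
      (sin (of_int j * pi) / of_int j - sin (of_int j * 0) / of_int j)) {0..pi}"
    by (intro fundamental_theorem_of_calculus) auto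
  moreover have "sin (of_int j * pi) = 0" by (simp add: sin_zero_iff_int2)
  ultimately show ?thesis using False by simp
qed (use has_integral_const_real[of "1::real" 0 pi] in simp)

lemma sin_sin_cos_eq:
  fixes A B K :: real
  shows "sin A * sin B * cos K = (cos (A - B - K) + cos (A - B + K) - cos (A + B - K) - cos (A + B + K)) / 4"
  by (simp add: sin_times_sin cos_times_cos left_diff_distrib diff_divide_distrib add_divide_distrib)

lemma sin_sin_cos_int_has_integral:
  fixes a b k :: int
  shows "((\<lambda>x. sin (a * x) * sin (b * x) * cos (k * x)) has_integral
     pi / 4 * (of_bool (a - b - k = 0) + of_bool (a - b + k = 0)
               - of_bool (a + b - k = 0) - of_bool (a + b + k = 0))) {0..pi}"
proof -
  have "((\<lambda>x. (cos (of_int (a - b - k) * x) + cos (of_int (a - b + k) * x)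
        - cos (of_int (a + b - k) * x) - cos (of_int (a + b + k) * x)) / 4) has_integral
      (pi * of_bool (a - b - k = 0) + pi * of_bool (a - b + k = 0)
        - pi * of_bool (a + b - k = 0) - pi * of_bool (a + b + k = 0)) / 4) {0..pi}"
    by (intro has_integral_divide has_integral_diff has_integral_add cos_int_mult_has_integral)
  moreover have "(\<lambda>x::real. sin (a * x) * sin (b * x) * cos (k * x)) = (\<lambda>x. (cos (of_int (a - b - k) * x)
      + cos (of_int (a - b + k) * x) - cos (of_int (a + b - k) * x) - cos (of_int (a + b + k) * x)) / 4)"
    by (simp only: sin_sin_cos_eq of_int_diff of_int_add left_diff_distrib distrib_right)
  ultimately show ?thesis by (simp add: field_simps)
qed

lemma dvd_power_add_one_imp:
  fixes q :: nat
  assumes "q \<ge> 2" "q dvd q ^ m + 1"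
  shows "m = 0 \<and> q = 2"
proof (cases m)
  case 0
  with assms have "q dvd 2" by (simp add: numeral_2_eq_2)
  with assms show ?thesis using 0 by (simp add: dvd_imp_le le_antisym)
next
  case (Suc k)
  then have "q dvd q ^ m" by simp
  with assms(2) have "q dvd 1" using dvd_add_right_iff by blast
  with assms(1) show ?thesis by simp
qed

lemma power_add_power_eq_power_add_power:
  fixes q :: nat
  assumes "q \<ge> 2" "j < M" "q ^ n + q ^ m = q ^ M + q ^ j"
  shows "(n = j \<and> m = M) \<or> (n = M \<and> m = j)"
  using assms(2,3)
proof (induction j arbitrary: n m M)
  case 0
  have "n = 0 \<or> m = 0"
  proof (rule ccontr)
    assume "\<not> (n = 0 \<or> m = 0)"
    then have "q dvd q ^ n + q ^ m" by simp
    then have "q dvd q ^ M + 1" using 0 by simp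
    then have "M = 0" using dvd_power_add_one_imp[OF assms(1)] by blast
    then show False using 0 by simp
  qed
  then show ?case using 0 assms(1) by (auto simp: power_inject_exp)
next
  case (Suc j)
  have "a \<noteq> 0" if "q ^ a + q ^ b = q ^ M + q ^ Suc j" for a b
  proof
    assume "a = 0"
    have "q dvd q ^ M + q ^ Suc j" using Suc.prems(1) by simp
    then have "q dvd q ^ b + 1" using that \<open>a = 0\<close> by (simp add: add.commute)
    then have "b = 0" using dvd_power_add_one_imp[OF assms(1)] by blast
    then have "q ^ M + q ^ Suc j = 2" using that \<open>a = 0\<close> by simp
    moreover have "q \<le> q ^ M" "q \<le> q ^ Suc j" using assms(1) Suc.prems(1) by (simp_all add: self_le_power)
    ultimately show False using assms(1) by linarith
  qed
  then obtain n' m' M' where "n = Suc n'" "m = Suc m'" "M = Suc M'"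
    using Suc.prems by (metis add.commute not0_implies_Suc)
  with Suc.prems have "j < M'" "q * (q ^ n' + q ^ m') = q * (q ^ M' + q ^ j)"
    by (simp_all add: distrib_left)
  then have "j < M'" "q ^ n' + q ^ m' = q ^ M' + q ^ j" using assms(1) by simp_all
  with Suc.IH show ?case using \<open>n = Suc n'\<close> \<open>m = Suc m'\<close> \<open>M = Suc M'\<close> by auto
qed

lemma power_ne_power_add_power_add_one:
  fixes q :: nat
  assumes "q \<ge> 2" "2 \<le> M"
  shows "q ^ n \<noteq> q ^ m + q ^ M + 1"
proof
  assume eq: "q ^ n = q ^ m + q ^ M + 1"
  show False
  proof (cases "m = 0")
    case True
    then have "q ^ M < q ^ n" using eq by simp
    then have "2 \<le> n" using assms by (simp add: power_strict_increasing_iff)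
    then have "q\<^sup>2 dvd q ^ n" "q\<^sup>2 dvd q ^ M" using assms(2) by (simp_all add: le_imp_power_dvd)
    moreover have "q ^ n = q ^ M + 2" using eq True by simp
    ultimately have "q\<^sup>2 dvd q ^ M + 2" "q\<^sup>2 dvd q ^ M" by simp_all
    then have "q\<^sup>2 dvd 2" by (simp only: dvd_add_right_iff)
    then have "q\<^sup>2 \<le> 2" by (rule dvd_imp_le) simp
    moreover have "4 \<le> q\<^sup>2" using assms(1) power_mono[of 2 q 2] by simp
    ultimately show False by linarith
  next
    case False
    have "n \<noteq> 0" using eq assms(1) by (intro notI) (simp add: add_pos_pos)
    then have "q dvd q ^ n" by simp
    moreover have "q ^ n = (q ^ m + q ^ M) + 1" using eq by simp
    ultimately have "q dvd (q ^ m + q ^ M) + 1" by simp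
    moreover have "q dvd q ^ m + q ^ M" using False assms(2) by simp
    ultimately have "q dvd 1" using dvd_add_right_iff by blast
    then show False using assms(1) by simp
  qed
qed

lemma power_ne_power_add_power_add_power:
  fixes q :: nat
  assumes "q \<ge> 2" "j + 2 \<le> M"
  shows "q ^ n \<noteq> q ^ m + q ^ M + q ^ j"
  using assms(2)
proof (induction j arbitrary: n m M)
  case 0
  then show ?case using power_ne_power_add_power_add_one[OF assms(1)] by simp
next
  case (Suc j)
  show ?case
  proof
    assume eq: "q ^ n = q ^ m + q ^ M + q ^ Suc j"
    have "n \<noteq> 0"
    proof
      assume "n = 0"
      then have "1 = q ^ m + q ^ M + q ^ Suc j" using eq by simp
      moreover have "0 < q ^ m" "0 < q ^ M" "0 < q ^ Suc j" using assms(1) by simp_all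
      ultimately show False by linarith
    qed
    have "m \<noteq> 0"
    proof
      assume "m = 0"
      then have "q ^ n = (q ^ M + q ^ Suc j) + 1" using eq by simp
      moreover have "q dvd q ^ n" using \<open>n \<noteq> 0\<close> by simp
      ultimately have "q dvd (q ^ M + q ^ Suc j) + 1" by simp
      moreover have "q dvd q ^ M + q ^ Suc j" using Suc.prems by simp
      ultimately have "q dvd 1" using dvd_add_right_iff by blast
      then show False using assms(1) by simp
    qed
    then obtain n' m' M' where "n = Suc n'" "m = Suc m'" "M = Suc M'"
      using \<open>n \<noteq> 0\<close> Suc.prems by (metis add_2_eq_Suc' add_Suc_right not0_implies_Suc Suc_le_D)
    with eq have "q * q ^ n' = q * (q ^ m' + q ^ M' + q ^ j)" by (simp add: distrib_left)
    then have "q ^ n' = q ^ m' + q ^ M' + q ^ j" using assms(1) by simp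
    moreover have "j + 2 \<le> M'" using Suc.prems \<open>M = Suc M'\<close> by simp
    ultimately show False using Suc.IH by blast
  qed
qed

lemma sin_power_sin_power_cos_has_integral:
  fixes q :: nat
  assumes "q \<ge> 2" "j + 2 \<le> M"
  shows "((\<lambda>x. sin (real q ^ n * x) * sin (real q ^ m * x) * cos (real (q ^ M + q ^ j) * x)) has_integral
           (if (n = j \<and> m = M) \<or> (n = M \<and> m = j) then - pi / 4 else 0)) {0..pi}"
proof -
  define a b k where "a = int (q ^ n)" "b = int (q ^ m)" "k = int (q ^ M + q ^ j)"
  have "a - b - k \<noteq> 0"
    using power_ne_power_add_power_add_power[OF assms, of n m]
    unfolding a_b_k_def by (metis add.assoc eq_iff_diff_eq_0 diff_diff_eq of_nat_add of_nat_eq_iff)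
  moreover have "a - b + k \<noteq> 0"
    using power_ne_power_add_power_add_power[OF assms, of m n]
    unfolding a_b_k_def by (metis add.assoc eq_iff_diff_eq_0 diff_add_eq_diff_diff_swap diff_diff_eq of_nat_add of_nat_eq_iff)
  moreover have "a + b + k \<noteq> 0"
  proof -
    have "0 < a" "0 \<le> b" "0 \<le> k" unfolding a_b_k_def using assms(1) by simp_all
    then show ?thesis by linarith
  qed
  moreover have "a + b - k = 0 \<longleftrightarrow> q ^ n + q ^ m = q ^ M + q ^ j"
    unfolding a_b_k_def by (metis eq_iff_diff_eq_0 of_nat_add of_nat_eq_iff)
  ultimately have v: "pi / 4 * (of_bool (a - b - k = 0) + of_bool (a - b + k = 0)
      - of_bool (a + b - k = 0) - of_bool (a + b + k = 0))
      = (if (n = j \<and> m = M) \<or> (n = M \<and> m = j) then - pi / 4 else 0)"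
    using power_add_power_eq_power_add_power[OF assms(1), of j M n m] assms(2) by auto
  from sin_sin_cos_int_has_integral[of a b k] show ?thesis
    unfolding v unfolding a_b_k_def by simp
qed

lemma suminf_suminf_eq_pair:
  fixes c :: "nat \<Rightarrow> nat \<Rightarrow> 'a::real_normed_vector"
  assumes "j \<noteq> M" and zero: "\<And>n m. \<not> ((n = j \<and> m = M) \<or> (n = M \<and> m = j)) \<Longrightarrow> c n m = 0"
  shows "(\<Sum>n. \<Sum>m. c n m) = c j M + c M j"
proof -
  have "(\<Sum>m. c n m) = (if n = j then c j M else if n = M then c M j else 0)" for n
    using assms by (subst suminf_finite[of "{j, M}"]) auto
  then show ?thesis using assms(1) by (subst suminf_finite[of "{j, M}"]) auto
qed

lemma cos_sq_add_cos_diff_sq: "(cos a)\<^sup>2 + (cos (a - d))\<^sup>2 = 1 + cos (2 * a - d) * cos d"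
  for a d :: real
proof -
  have "cos (2 * a - d) * cos d = (cos (2 * a - d - d) + cos (2 * a - d + d)) / 2"
    by (rule cos_times_cos)
  also have "2 * a - d - d = 2 * (a - d)" by simp
  also have "2 * a - d + d = 2 * a" by simp
  finally show ?thesis using cos_double_cos[of a] cos_double_cos[of "a - d"] by simp
qed

lemma abs_cos_ge_or_abs_cos_diff_ge:
  fixes a d :: real
  shows "sqrt ((1 - \<bar>cos d\<bar>) / 2) \<le> \<bar>cos a\<bar> \<or> sqrt ((1 - \<bar>cos d\<bar>) / 2) \<le> \<bar>cos (a - d)\<bar>"
proof -
  have "\<bar>cos (2 * a - d) * cos d\<bar> \<le> \<bar>cos d\<bar>"
    by (simp add: abs_mult mult_left_le_one_le)
  then have "- \<bar>cos d\<bar> \<le> cos (2 * a - d) * cos d"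
    using abs_le_D2 by fastforce
  then have "1 - \<bar>cos d\<bar> \<le> (cos a)\<^sup>2 + (cos (a - d))\<^sup>2"
    unfolding cos_sq_add_cos_diff_sq by simp
  then have "(1 - \<bar>cos d\<bar>) / 2 \<le> (cos a)\<^sup>2 \<or> (1 - \<bar>cos d\<bar>) / 2 \<le> (cos (a - d))\<^sup>2"
    by (intro disjCI) simp
  then show ?thesis
    by (metis real_sqrt_abs real_sqrt_le_mono)
qed

lemma ex_power_le_less_power_Suc:
  fixes q :: nat and y :: real
  assumes "q \<ge> 2" "real q ^ k \<le> y"
  shows "\<exists>M\<ge>k. real q ^ M \<le> y \<and> y < real q ^ Suc M"
proof -
  have "1 \<le> real q ^ k" using assms(1) by simp
  then have "1 \<le> nat \<lfloor>y\<rfloor>" using assms(2) by linarith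
  then obtain M where M: "q ^ M \<le> nat \<lfloor>y\<rfloor>" "Suc (nat \<lfloor>y\<rfloor>) \<le> q ^ Suc M"
    using ex_power_ivl1[OF assms(1)] by (metis Suc_eq_plus1 Suc_leI)
  have "real (nat \<lfloor>y\<rfloor>) = of_int \<lfloor>y\<rfloor>" using \<open>1 \<le> nat \<lfloor>y\<rfloor>\<close> by simp
  moreover have "real (q ^ M) \<le> real (nat \<lfloor>y\<rfloor>)" using M(1) by (rule of_nat_mono)
  moreover have "real (Suc (nat \<lfloor>y\<rfloor>)) \<le> real (q ^ Suc M)" using M(2) by (rule of_nat_mono)
  ultimately have "real q ^ M \<le> y" "y < real q ^ Suc M" by simp_all linarith+
  moreover have "k < Suc M"
    using power_strict_increasing_iff[of "real q" k "Suc M"] assms \<open>y < real q ^ Suc M\<close> by simp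
  ultimately show ?thesis by (intro exI[of _ M]) simp
qed

section \<open>The Weierstrass-like wave function\<close>

locale weierstrass_wave =
  fixes q :: nat and s t :: real
  assumes q_ge_2: "q \<ge> 2" and s_pos: "0 < s" and s_less_2: "s < 2"
begin

definition amp :: "nat \<Rightarrow> real" where
  "amp n = real q powr (real n * (s - 2))"

definition phase :: "nat \<Rightarrow> real" where
  "phase n = real q ^ (2 * n) * t"

definition coef :: "nat \<Rightarrow> complex" where
  "coef n = of_real (amp n) * exp (- \<i> * of_real (phase n))"

definition wave_term :: "nat \<Rightarrow> real \<Rightarrow> complex" where
  "wave_term n x = coef n * of_real (sin (real q ^ n * x))"

definition wave :: "real \<Rightarrow> complex" where
  "wave x = (\<Sum>n. wave_term n x)"

abbreviation graph :: "(real \<times> real) set" where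
  "graph \<equiv> graph_on {0..pi} (\<lambda>x. Pdens q s x t)"

lemma q_powr_less_1: "real q powr (s - 2 + a) < 1" if "a < 2 - s"
  using q_ge_2 that by (intro powr_less_one) auto

lemma amp_eq_power: "amp n = (real q powr (s - 2)) ^ n"
  using q_ge_2 by (simp add: amp_def powr_power mult.commute)

lemma amp_eq_powr: "amp n = (real q ^ n) powr (s - 2)"
  using q_ge_2 by (simp add: amp_def powr_realpow[symmetric] powr_powr)

lemma amp_pos: "0 < amp n"
  using q_ge_2 by (simp add: amp_def)

lemma amp_antimono: "m \<le> n \<Longrightarrow> amp n \<le> amp m"
  unfolding amp_eq_power using q_powr_less_1[of 0] s_less_2
  by (intro power_decreasing) auto

lemma summable_amp: "summable amp"
  unfolding amp_eq_power[abs_def] using q_powr_less_1[of 0] s_less_2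
  by (intro summable_geometric) simp

lemma norm_coef: "norm (coef n) = amp n"
  using amp_pos[of n] by (simp add: coef_def norm_mult norm_exp_eq_Re)

lemma norm_wave_term_le: "norm (wave_term n x) \<le> amp n"
  using amp_pos[of n] abs_sin_le_one[of "real q ^ n * x"]
  by (simp add: wave_term_def norm_mult norm_coef mult_left_le)

lemma continuous_on_wave_term: "continuous_on A (wave_term n)"
  unfolding wave_term_def by (intro continuous_intros)

lemma wave_term_sums: "(\<lambda>n. wave_term n x) sums wave x"
  unfolding wave_def using summable_comparison_test'[OF summable_amp norm_wave_term_le]
  by (rule summable_sums)

lemma norm_wave_le: "norm (wave x) \<le> (\<Sum>n. amp n)"
  unfolding wave_def by (rule norm_suminf_le[OF norm_wave_term_le summable_amp])

lemma continuous_on_wave: "continuous_on A wave"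
  unfolding wave_def[abs_def]
  by (rule continuous_on_suminf_M_test[OF continuous_on_wave_term norm_wave_term_le summable_amp])

lemma Psi_eq: "Psi q s x t = of_real (wnorm q s) * wave x"
  unfolding Psi_def wave_def wave_term_def coef_def amp_def phase_def by (simp add: mult_ac)

lemma Pdens_eq: "Pdens q s x t = (wnorm q s)\<^sup>2 * (norm (wave x))\<^sup>2"
  by (simp add: Pdens_def Psi_eq norm_mult power_mult_distrib)

lemma continuous_on_Pdens: "continuous_on A (\<lambda>x. Pdens q s x t)"
  unfolding Pdens_eq using continuous_on_wave by (intro continuous_intros)

lemma abs_Pdens_le: "\<bar>Pdens q s x t\<bar> \<le> (wnorm q s * (\<Sum>n. amp n))\<^sup>2"
proof -
  have "(norm (wave x))\<^sup>2 \<le> (\<Sum>n. amp n)\<^sup>2"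
    by (rule power_mono[OF norm_wave_le norm_ge_zero])
  from mult_left_mono[OF this zero_le_power2[of "wnorm q s"]]
  show ?thesis by (simp add: Pdens_eq power_mult_distrib)
qed

lemma wave_hoelder:
  assumes "0 < a" "a \<le> 1" "a < 2 - s"
  obtains C where "C \<ge> 0" "\<And>x y. norm (wave x - wave y) \<le> C * \<bar>x - y\<bar> powr a"
proof
  define \<rho> where "\<rho> = real q powr (s - 2 + a)"
  have \<rho>: "0 \<le> \<rho>" "\<rho> < 1" unfolding \<rho>_def using q_powr_less_1[OF assms(3)] by auto
  show "0 \<le> 2 powr (1 - a) * (\<Sum>n. \<rho> ^ n)"
    using \<rho> by (simp add: suminf_geometric)
  fix x y
  have "norm (wave_term n x - wave_term n y) \<le> \<rho> ^ n * (2 powr (1 - a) * \<bar>x - y\<bar> powr a)" for n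
  proof -
    have "norm (wave_term n x - wave_term n y) = amp n * \<bar>sin (real q ^ n * x) - sin (real q ^ n * y)\<bar>"
      by (simp add: wave_term_def norm_coef norm_mult flip: right_diff_distrib of_real_diff)
    also have "\<dots> \<le> amp n * (2 powr (1 - a) * \<bar>real q ^ n * x - real q ^ n * y\<bar> powr a)"
      using amp_pos[of n] by (intro mult_left_mono abs_sin_diff_le_powr assms) auto
    also have "\<bar>real q ^ n * x - real q ^ n * y\<bar> = real q ^ n * \<bar>x - y\<bar>"
      by (simp add: abs_mult flip: right_diff_distrib)
    also have "amp n * (real q ^ n) powr a = \<rho> ^ n"
      using q_ge_2 by (simp add: \<rho>_def amp_def powr_realpow[symmetric] powr_powr powr_power
          flip: powr_add) (simp add: algebra_simps)
    then have "amp n * (2 powr (1 - a) * (real q ^ n * \<bar>x - y\<bar>) powr a)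
        = \<rho> ^ n * (2 powr (1 - a) * \<bar>x - y\<bar> powr a)"
      by (simp add: powr_mult mult_ac)
    finally show ?thesis .
  qed
  moreover have "wave x - wave y = (\<Sum>n. wave_term n x - wave_term n y)"
    unfolding wave_def
    by (rule suminf_diff[OF sums_summable[OF wave_term_sums] sums_summable[OF wave_term_sums]])
  ultimately have "norm (wave x - wave y) \<le> (\<Sum>n. \<rho> ^ n * (2 powr (1 - a) * \<bar>x - y\<bar> powr a))"
    using \<rho> by (simp add: norm_suminf_le summable_mult2 summable_geometric)
  also have "\<dots> = 2 powr (1 - a) * (\<Sum>n. \<rho> ^ n) * \<bar>x - y\<bar> powr a"
    using \<rho> by (simp add: suminf_mult2[symmetric] summable_geometric mult_ac)
  finally show "norm (wave x - wave y) \<le> 2 powr (1 - a) * (\<Sum>n. \<rho> ^ n) * \<bar>x - y\<bar> powr a" .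
qed

lemma Pdens_hoelder:
  assumes "0 < a" "a \<le> 1" "a < 2 - s"
  obtains C where "C \<ge> 0" "\<And>x y. \<bar>Pdens q s x t - Pdens q s y t\<bar> \<le> C * \<bar>x - y\<bar> powr a"
proof -
  obtain C where C: "C \<ge> 0" "\<And>x y. norm (wave x - wave y) \<le> C * \<bar>x - y\<bar> powr a"
    using wave_hoelder[OF assms] by blast
  define A where "A = (\<Sum>n. amp n)"
  have A: "norm (wave x) \<le> A" for x unfolding A_def by (rule norm_wave_le)
  then have "0 \<le> A" using norm_ge_zero order_trans by blast
  have bound: "\<bar>Pdens q s x t - Pdens q s y t\<bar> \<le> ((wnorm q s)\<^sup>2 * 2 * A * C) * \<bar>x - y\<bar> powr a" for x y
  proof -
    have "(norm (wave x))\<^sup>2 - (norm (wave y))\<^sup>2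
        = (norm (wave x) + norm (wave y)) * (norm (wave x) - norm (wave y))"
      by (simp add: power2_eq_square algebra_simps)
    then have "\<bar>(norm (wave x))\<^sup>2 - (norm (wave y))\<^sup>2\<bar>
        = (norm (wave x) + norm (wave y)) * \<bar>norm (wave x) - norm (wave y)\<bar>"
      by (simp add: abs_mult)
    also have "\<dots> \<le> (2 * A) * (C * \<bar>x - y\<bar> powr a)"
      using A[of x] A[of y] C(2)[of x y] norm_triangle_ineq3[of "wave x" "wave y"] \<open>0 \<le> A\<close>
      by (intro mult_mono) auto
    finally have diff: "\<bar>(norm (wave x))\<^sup>2 - (norm (wave y))\<^sup>2\<bar> \<le> (2 * A) * (C * \<bar>x - y\<bar> powr a)" .
    have "\<bar>Pdens q s x t - Pdens q s y t\<bar> = (wnorm q s)\<^sup>2 * \<bar>(norm (wave x))\<^sup>2 - (norm (wave y))\<^sup>2\<bar>"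
      unfolding Pdens_eq by (simp add: abs_mult flip: right_diff_distrib)
    also have "\<dots> \<le> (wnorm q s)\<^sup>2 * ((2 * A) * (C * \<bar>x - y\<bar> powr a))"
      using diff by (rule mult_left_mono) simp
    finally show ?thesis by (simp add: mult_ac)
  qed
  have "0 \<le> (wnorm q s)\<^sup>2 * 2 * A * C"
    using C(1) \<open>0 \<le> A\<close> by simp
  from that[OF this bound] show ?thesis .
qed

lemma Re_coef_mult_cnj_coef: "Re (coef n * cnj (coef m)) = amp n * amp m * cos (phase m - phase n)"
  by (simp add: coef_def exp_cnj Re_exp Im_exp cos_diff algebra_simps)

lemma coef_mult_cnj_add: "coef n * cnj (coef m) + coef m * cnj (coef n)
    = of_real (2 * (amp n * amp m * cos (phase m - phase n)))"
proof -
  have "coef m * cnj (coef n) = cnj (coef n * cnj (coef m))" by simp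
  then show ?thesis by (simp only: complex_add_cnj Re_coef_mult_cnj_coef)
qed

lemma wave_cnj_cos_has_integral:
  assumes "j + 2 \<le> M"
  shows "((\<lambda>x. wave x * (cnj (wave x) * of_real (cos (real (q ^ M + q ^ j) * x)))) has_integral
           - of_real (pi / 2 * amp j * amp M * cos (phase M - phase j))) {0..pi}"
proof -
  define K where "K = real (q ^ M + q ^ j)"
  define v where "v m x = cnj (wave_term m x) * of_real (cos (K * x))" for m x
  define c where "c n m = coef n * cnj (coef m) *
      of_real (if (n = j \<and> m = M) \<or> (n = M \<and> m = j) then - pi / 4 else 0)" for n m
  have "j \<noteq> M" using assms by simp
  have integral_term: "integral {0..pi} (\<lambda>x. wave_term n x * v m x) = c n m" for n m
  proof (rule integral_unique)
    from has_integral_mult_right[OF has_integral_of_real[OF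
          sin_power_sin_power_cos_has_integral[OF q_ge_2 assms, of n m]], of "coef n * cnj (coef m)"]
    show "((\<lambda>x. wave_term n x * v m x) has_integral c n m) {0..pi}"
      unfolding wave_term_def v_def c_def K_def by (simp add: mult_ac)
  qed
  have int: "((\<lambda>x. (\<Sum>n. wave_term n x) * (\<Sum>m. v m x)) has_integral (\<Sum>n. \<Sum>m. c n m)) {0..pi}"
    unfolding integral_term[symmetric]
  proof (rule has_integral_suminf_mult_suminf[where U = amp and V = amp])
    show "continuous_on {0..pi} (v m)" for m
      unfolding v_def using continuous_on_wave_term by (intro continuous_intros continuous_on_cnj)
    show "norm (v m x) \<le> amp m" for m x
    proof -
      have "norm (wave_term m x) * \<bar>cos (K * x)\<bar> \<le> amp m * 1"
        by (rule mult_mono) (simp_all add: norm_wave_term_le less_imp_le[OF amp_pos])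
      then show ?thesis by (simp add: v_def norm_mult)
    qed
  qed (simp_all add: continuous_on_wave_term norm_wave_term_le summable_amp)
  have "(\<Sum>n. \<Sum>m. c n m) = c j M + c M j"
    using \<open>j \<noteq> M\<close> by (rule suminf_suminf_eq_pair) (simp only: c_def if_False of_real_0 mult_zero_right)
  also have "\<dots> = (coef j * cnj (coef M) + coef M * cnj (coef j)) * of_real (- pi / 4)"
    using \<open>j \<noteq> M\<close> unfolding c_def by (simp add: algebra_simps)
  also have "\<dots> = of_real (2 * (amp j * amp M * cos (phase M - phase j)) * (- pi / 4))"
    by (simp only: coef_mult_cnj_add of_real_mult)
  also have "2 * (amp j * amp M * cos (phase M - phase j)) * (- pi / 4)
      = - (pi / 2 * amp j * amp M * cos (phase M - phase j))"
    by simp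
  finally have sum_c: "(\<Sum>n. \<Sum>m. c n m) = - of_real (pi / 2 * amp j * amp M * cos (phase M - phase j))"
    by (simp only: of_real_minus)
  have sum_v: "(\<Sum>m. v m x) = cnj (wave x) * of_real (cos (K * x))" for x
    using sums_mult2[OF sums_cnj[THEN iffD2, OF wave_term_sums]] unfolding v_def by (simp add: sums_iff)
  from int show ?thesis unfolding sum_c sum_v wave_def[symmetric] K_def .
qed

lemma has_integral_Re_of_real:
  assumes "((\<lambda>x. complex_of_real (f x)) has_integral complex_of_real I) S"
  shows "(f has_integral I) S"
  using has_integral_linear[OF assms bounded_linear_Re] by (simp add: o_def)

lemma Pdens_cos_has_integral:
  assumes "j + 2 \<le> M"
  shows "((\<lambda>x. Pdens q s x t * cos (real (q ^ M + q ^ j) * x)) has_integral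
           - ((wnorm q s)\<^sup>2 * pi / 2) * amp j * amp M * cos (phase M - phase j)) {0..pi}"
proof (rule has_integral_Re_of_real)
  define K where "K = real (q ^ M + q ^ j)"
  have F: "of_real ((wnorm q s)\<^sup>2) * (wave x * (cnj (wave x) * of_real (cos (K * x))))
      = complex_of_real (Pdens q s x t * cos (K * x))" for x
  proof -
    have "of_real ((wnorm q s)\<^sup>2) * (wave x * (cnj (wave x) * of_real (cos (K * x))))
        = of_real ((wnorm q s)\<^sup>2) * (wave x * cnj (wave x)) * of_real (cos (K * x))"
      by (simp only: mult.assoc)
    also have "\<dots> = of_real ((wnorm q s)\<^sup>2) * of_real ((norm (wave x))\<^sup>2) * of_real (cos (K * x))"
      by (simp only: complex_norm_square)
    finally show ?thesis by (simp add: Pdens_eq)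
  qed
  have V: "of_real ((wnorm q s)\<^sup>2) * - of_real (pi / 2 * amp j * amp M * cos (phase M - phase j))
      = complex_of_real (- ((wnorm q s)\<^sup>2 * pi / 2) * amp j * amp M * cos (phase M - phase j))"
    by simp
  from has_integral_mult_right[OF wave_cnj_cos_has_integral[OF assms], of "of_real ((wnorm q s)\<^sup>2)"]
  show "((\<lambda>x. complex_of_real (Pdens q s x t * cos (real (q ^ M + q ^ j) * x))) has_integral
      complex_of_real (- ((wnorm q s)\<^sup>2 * pi / 2) * amp j * amp M * cos (phase M - phase j))) {0..pi}"
    unfolding K_def[symmetric] F V .
qed

lemma wnorm_pos: "0 < wnorm q s"
proof -
  have "real q powr (2 * (s - 2)) < 1" using q_ge_2 s_less_2 by (intro powr_less_one) auto
  then show ?thesis by (simp add: wnorm_def)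
qed

lemma phase_diff_eq_mult: "phase M - phase 0 = (phase 1 - phase 0) * (\<Sum>i<M. (real q ^ 2) ^ i)"
proof -
  have "phase M - phase 0 = ((real q ^ 2) ^ M - 1) * t"
    unfolding phase_def power_mult by (simp add: algebra_simps)
  also have "\<dots> = (real q ^ 2 - 1) * (\<Sum>i<M. (real q ^ 2) ^ i) * t"
    by (simp only: power_diff_1_eq)
  also have "\<dots> = (phase 1 - phase 0) * (\<Sum>i<M. (real q ^ 2) ^ i)"
    by (simp add: phase_def algebra_simps power2_eq_square)
  finally show ?thesis .
qed

text \<open>If \<open>phase 1 - phase 0\<close> is a multiple of \<open>pi\<close>, so is every \<open>phase M - phase 0\<close>; otherwise
  \<open>cos\<close> cannot be small at both \<open>phase M - phase 0\<close> and \<open>phase M - phase 1\<close>.\<close>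
lemma phase_cos_lower_bound: "\<exists>c>0. \<forall>M. \<exists>j\<le>1. c \<le> \<bar>cos (phase M - phase j)\<bar>"
proof (cases "sin (phase 1 - phase 0) = 0")
  case True
  then obtain i :: int where i: "phase 1 - phase 0 = pi * of_int i"
    by (auto simp: sin_zero_iff_int2 mult.commute)
  have "\<bar>cos (phase M - phase 0)\<bar> = 1" for M
  proof -
    define N where "N = (\<Sum>k<M. (q ^ 2) ^ k)"
    have "(\<Sum>k<M. (real q ^ 2) ^ k) = of_int (int N)" unfolding N_def by simp
    then have "phase M - phase 0 = pi * of_int (i * int N)"
      unfolding phase_diff_eq_mult[of M] i by simp
    then have "cos (phase M - phase 0) = (if even (i * int N) then 1 else -1)"
      by (simp only: cos_npi_int)
    then show ?thesis by simp
  qed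
  then show ?thesis by (intro exI[of _ 1]) (auto intro!: exI[of _ 0])
next
  case False
  define d where "d = phase 1 - phase 0"
  have "0 < (sin d)\<^sup>2" using False unfolding d_def by simp
  then have "(cos d)\<^sup>2 < 1" using sin_cos_squared_add[of d] by linarith
  then have "\<bar>cos d\<bar> < 1" by (simp add: abs_square_less_1)
  then have "0 < sqrt ((1 - \<bar>cos d\<bar>) / 2)" by simp
  moreover have "phase M - phase 1 = (phase M - phase 0) - d" for M unfolding d_def by simp
  ultimately show ?thesis
    using abs_cos_ge_or_abs_cos_diff_ge[of d "phase M - phase 0" for M]
    by (metis le_numeral_extra(4) zero_le_one)
qed

lemma Pdens_fourier_coeff_lower:
  "\<exists>C>0. \<forall>M\<ge>3. \<exists>j\<le>1.
     C * amp M \<le> \<bar>integral {0..pi} (\<lambda>x. Pdens q s x t * cos (real (q ^ M + q ^ j) * x))\<bar>"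
proof -
  obtain c where c: "c > 0" "\<And>M. \<exists>j\<le>1. c \<le> \<bar>cos (phase M - phase j)\<bar>"
    using phase_cos_lower_bound by blast
  define C where "C = (wnorm q s)\<^sup>2 * pi / 2 * amp 1 * c"
  have "C * amp M \<le> \<bar>integral {0..pi} (\<lambda>x. Pdens q s x t * cos (real (q ^ M + q ^ j) * x))\<bar>"
    if "j \<le> 1" "M \<ge> 3" "c \<le> \<bar>cos (phase M - phase j)\<bar>" for j M
  proof -
    have "amp 1 * c \<le> amp j * \<bar>cos (phase M - phase j)\<bar>"
      using amp_antimono[OF that(1)] that(3) amp_pos[of 1] c(1) by (intro mult_mono) auto
    then have "((wnorm q s)\<^sup>2 * pi / 2 * amp M) * (amp 1 * c)
        \<le> ((wnorm q s)\<^sup>2 * pi / 2 * amp M) * (amp j * \<bar>cos (phase M - phase j)\<bar>)"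
      using amp_pos[of M] by (intro mult_left_mono) auto
    then have "C * amp M \<le> (wnorm q s)\<^sup>2 * pi / 2 * amp j * amp M * \<bar>cos (phase M - phase j)\<bar>"
      unfolding C_def by (simp add: mult_ac)
    also have "\<dots> = \<bar>integral {0..pi} (\<lambda>x. Pdens q s x t * cos (real (q ^ M + q ^ j) * x))\<bar>"
      using integral_unique[OF Pdens_cos_has_integral[of j M]] that amp_pos[of j] amp_pos[of M]
      by (simp add: abs_mult)
    finally show ?thesis .
  qed
  moreover have "C > 0" unfolding C_def using wnorm_pos amp_pos[of 1] c(1) by simp
  ultimately show ?thesis using c(2) by blast
qed

lemma finite_grid_cells_graph_Pdens: "\<delta> > 0 \<Longrightarrow> finite (grid_cells graph \<delta>)"
  by (rule finite_grid_cells_graph[where B = "(wnorm q s * (\<Sum>n. amp n))\<^sup>2"]) (simp_all add: abs_Pdens_le)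

lemma grid_count_at_fourier_scales:
  "\<exists>C>0. \<exists>B\<ge>0. \<forall>M\<ge>3. \<exists>l. pi / real q ^ M \<le> l \<and>
     C * (real q ^ M) powr s - B * real q ^ M \<le> real (grid_count graph l)"
proof -
  obtain C0 where C0: "C0 > 0" "\<And>M. M \<ge> 3 \<Longrightarrow> \<exists>j\<le>1.
      C0 * amp M \<le> \<bar>integral {0..pi} (\<lambda>x. Pdens q s x t * cos (real (q ^ M + q ^ j) * x))\<bar>"
    using Pdens_fourier_coeff_lower by blast
  define B where "B = (wnorm q s * (\<Sum>n. amp n))\<^sup>2"
  have "\<exists>l. pi / real q ^ M \<le> l \<and>
      C0 / (4 * pi\<^sup>2) * (real q ^ M) powr s - B / (2 * pi) * real q ^ M \<le> real (grid_count graph l)"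
    if M: "M \<ge> 3" for M
  proof -
    obtain j where j: "j \<le> 1"
      "C0 * amp M \<le> \<bar>integral {0..pi} (\<lambda>x. Pdens q s x t * cos (real (q ^ M + q ^ j) * x))\<bar>"
      using C0(2)[OF M] by blast
    define X where "X = real q ^ M"
    have "q ^ j \<le> q ^ M" using j(1) M q_ge_2 by (intro power_increasing) auto
    then have X: "0 < X" "X \<le> real (q ^ M + q ^ j)" "real (q ^ M + q ^ j) \<le> 2 * X"
      unfolding X_def using q_ge_2 by simp_all
    have "C0 * X powr (s - 2) * X\<^sup>2 / (4 * pi\<^sup>2) - B / (2 * pi) * X
        \<le> real (grid_count graph (2 * pi / real (q ^ M + q ^ j)))"
      using j(2) X unfolding X_def amp_eq_powr
      by (intro real_grid_count_graph_ge_fourier_coeff[OF continuous_on_Pdens]) (simp_all add: B_def abs_Pdens_le)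
    moreover have "C0 * X powr (s - 2) * X\<^sup>2 = C0 * X powr s"
      using X(1) powr_add[of X "s - 2" 2] by (simp add: powr_numeral)
    moreover have "pi / X \<le> 2 * pi / real (q ^ M + q ^ j)"
      using X divide_left_mono[of "real (q ^ M + q ^ j)" "2 * X" "2 * pi"] by simp
    ultimately show ?thesis unfolding X_def by (intro exI[of _ "2 * pi / real (q ^ M + q ^ j)"]) simp
  qed
  moreover have "C0 / (4 * pi\<^sup>2) > 0" "B / (2 * pi) \<ge> 0" using C0(1) by (simp_all add: B_def)
  ultimately show ?thesis by blast
qed

lemma grid_count_graph_ge_powr_diff:
  "\<exists>c1>0. \<exists>c2\<ge>0. \<forall>\<delta>. 0 < \<delta> \<longrightarrow> \<delta> < pi / real q ^ 3 \<longrightarrow>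
     c1 * \<delta> powr (- s) - c2 * \<delta> powr (- 1) \<le> real (grid_count graph \<delta>)"
proof -
  obtain C B where C: "C > 0" "B \<ge> 0" and scale: "\<And>M. M \<ge> 3 \<Longrightarrow> \<exists>l. pi / real q ^ M \<le> l \<and>
      C * (real q ^ M) powr s - B * real q ^ M \<le> real (grid_count graph l)"
    using grid_count_at_fourier_scales by blast
  have "C / 9 * (pi / real q) powr s * \<delta> powr (- s) - B * pi / 9 * \<delta> powr (- 1)
      \<le> real (grid_count graph \<delta>)" if \<delta>: "0 < \<delta>" "\<delta> < pi / real q ^ 3" for \<delta>
  proof -
    have "0 < real q ^ 3" using q_ge_2 by simp
    with \<delta> have "real q ^ 3 \<le> pi / \<delta>" by (simp add: field_simps)
    then obtain M where M: "M \<ge> 3" "real q ^ M \<le> pi / \<delta>" "pi / \<delta> < real q ^ Suc M"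
      using ex_power_le_less_power_Suc[OF q_ge_2] by blast
    define X where "X = real q ^ M"
    from M(1) obtain l where l: "pi / X \<le> l" "C * X powr s - B * X \<le> real (grid_count graph l)"
      using scale unfolding X_def by blast
    have X: "0 < X" "X \<le> pi / \<delta>" "pi / (real q * \<delta>) < X"
      using M(2,3) q_ge_2 \<delta>(1) unfolding X_def by (simp_all add: field_simps)
    then have "\<delta> \<le> pi / X" using \<delta>(1) by (simp add: field_simps)
    then have "\<delta> \<le> l" using l(1) by linarith
    have "real (grid_count graph l) \<le> 9 * real (grid_count graph \<delta>)"
      using card_grid_cells_coarser[OF finite_grid_cells_graph_Pdens[OF \<delta>(1)] \<delta>(1) \<open>\<delta> \<le> l\<close>]
      unfolding grid_count_eq_card by linarith
    moreover have "C * ((pi / real q) powr s * \<delta> powr (- s)) \<le> C * X powr s"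
    proof (rule mult_left_mono)
      have "(pi / real q) powr s * \<delta> powr (- s) = (pi / (real q * \<delta>)) powr s"
        using \<delta>(1) q_ge_2 by (simp add: powr_divide powr_minus_divide powr_mult)
      also have "\<dots> \<le> X powr s" using X s_pos \<delta>(1) by (intro powr_mono2) auto
      finally show "(pi / real q) powr s * \<delta> powr (- s) \<le> X powr s" .
    qed (use C in simp)
    moreover have "B * X \<le> B * (pi * \<delta> powr (- 1))"
      using X(2) C(2) \<delta>(1) by (intro mult_left_mono) (simp_all add: powr_neg_one)
    ultimately have "C * ((pi / real q) powr s * \<delta> powr (- s)) - B * (pi * \<delta> powr (- 1))
        \<le> 9 * real (grid_count graph \<delta>)"
      using l(2) by linarith
    moreover have "C * ((pi / real q) powr s * \<delta> powr (- s)) - B * (pi * \<delta> powr (- 1))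
        = 9 * (C / 9 * (pi / real q) powr s * \<delta> powr (- s) - B * pi / 9 * \<delta> powr (- 1))"
      by (simp add: algebra_simps)
    ultimately show ?thesis by simp
  qed
  moreover have "C / 9 * (pi / real q) powr s > 0" "B * pi / 9 \<ge> 0" using C q_ge_2 by simp_all
  ultimately show ?thesis by blast
qed

lemma grid_count_graph_lower:
  "\<exists>c>0. \<forall>\<^sub>F \<delta> in at_right 0. c * \<delta> powr (- max s 1) \<le> real (grid_count graph \<delta>)"
proof (cases "s \<le> 1")
  case True
  have "1 * \<delta> powr (- max s 1) \<le> real (grid_count graph \<delta>)" if "0 < \<delta>" for \<delta>
  proof -
    have "1 / \<delta> \<le> pi / \<delta>" using that pi_ge_two by (simp add: divide_right_mono)
    also have "\<dots> \<le> real (grid_count graph \<delta>)"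
      using that by (intro real_grid_count_graph_ge finite_grid_cells_graph_Pdens) auto
    finally show ?thesis using True that by (simp add: powr_neg_one)
  qed
  then show ?thesis using eventually_at_right_less[of 0]
    by (intro exI[of _ 1]) (auto elim: eventually_mono)
next
  case False
  then have "max s 1 = s" "1 < s" by simp_all
  obtain c1 c2 where c: "c1 > 0" "c2 \<ge> 0" and bound: "\<And>\<delta>. 0 < \<delta> \<Longrightarrow> \<delta> < pi / real q ^ 3 \<Longrightarrow>
      c1 * \<delta> powr (- s) - c2 * \<delta> powr (- 1) \<le> real (grid_count graph \<delta>)"
    using grid_count_graph_ge_powr_diff by blast
  have "\<forall>\<^sub>F \<delta> in at_right 0. c1 / 2 * \<delta> powr (- s) \<le> c1 * \<delta> powr (- s) - c2 * \<delta> powr (- 1)"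
    using \<open>1 < s\<close> c(1) by real_asymp
  moreover have "\<forall>\<^sub>F \<delta> in at_right 0. \<delta> < pi / real q ^ 3"
    using q_ge_2 by (intro eventually_at_rightI[of 0 "pi / real q ^ 3"]) auto
  ultimately have "\<forall>\<^sub>F \<delta> in at_right 0. c1 / 2 * \<delta> powr (- max s 1) \<le> real (grid_count graph \<delta>)"
    using eventually_at_right_less[of 0] unfolding \<open>max s 1 = s\<close>
    by eventually_elim (use bound in fastforce)
  then show ?thesis using c(1) by (intro exI[of _ "c1 / 2"]) simp
qed

lemma grid_count_graph_upper:
  assumes "max s 1 < e"
  shows "\<exists>K. \<forall>\<^sub>F \<delta> in at_right 0. real (grid_count graph \<delta>) \<le> K * \<delta> powr (- e)"
proof -
  define a where "a = max (2 - e) ((2 - max s 1) / 2)"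
  have "2 - e \<le> a" "(2 - max s 1) / 2 \<le> a" unfolding a_def by simp_all
  moreover have "a < 2 - max s 1" unfolding a_def using assms s_less_2 by auto
  moreover have "s \<le> max s 1" "1 \<le> max s 1" "max s 1 < 2" using s_less_2 by auto
  ultimately have a: "0 < a" "a \<le> 1" "a < 2 - s" "- e \<le> a - 2"
    using assms by auto
  obtain C where C: "C \<ge> 0" "\<And>x y. \<bar>Pdens q s x t - Pdens q s y t\<bar> \<le> C * \<bar>x - y\<bar> powr a"
    using Pdens_hoelder[OF a(1-3)] by blast
  have "real (grid_count graph \<delta>) \<le> (pi + 3) * (2 * C + 2) * \<delta> powr (- e)"
    if "0 < \<delta>" "\<delta> \<le> 1" for \<delta>
  proof -
    have "real (grid_count graph \<delta>) \<le> (pi + 3) * (2 * C + 2) * \<delta> powr (a - 2)"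
      using that a C by (intro real_grid_count_graph_le_hoelder finite_grid_cells_graph_Pdens) auto
    also have "\<dots> \<le> (pi + 3) * (2 * C + 2) * \<delta> powr (- e)"
      using that a C(1) by (intro mult_left_mono powr_mono') auto
    finally show ?thesis .
  qed
  moreover have "\<forall>\<^sub>F \<delta> in at_right 0. 0 < \<delta> \<and> \<delta> \<le> (1::real)"
    by (simp add: eventually_at_right_field) (rule exI[of _ 1], simp)
  ultimately show ?thesis by (auto intro!: exI elim!: eventually_mono)
qed

end

theorem theorem1:
  fixes q :: nat and s t :: real
  assumes "q \<ge> 2" and "0 < s" and "s < 2"
  shows "has_box_dim (graph_on {0..pi} (\<lambda>x. Pdens q s x t)) (max s 1)"
proof -
  interpret weierstrass_wave q s t using assms by unfold_locales
  obtain c where "c > 0"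
    and lower: "\<forall>\<^sub>F \<delta> in at_right 0. c * \<delta> powr (- max s 1) \<le> real (grid_count graph \<delta>)"
    using grid_count_graph_lower by blast
  from has_box_dim_if_power_bounds[OF \<open>c > 0\<close> lower grid_count_graph_upper]
  show ?thesis .
qed

end
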